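(* Let $\hat y:\Lambda\to\mathbb R$ satisfy $\mathrm{dist}(D\hat y_b,\mathbb Z+\tfrac12)\ge\epsilon$ for all $b\in\mathcal B$, for some $\epsilon>0$, and suppose that the linear functional $\langle\delta\mathcal E(0),v\rangle:=\sum_{b\in\mathcal B}\psi'(D\hat y_b)Dv_b$ is bounded, i.e. there is $C$ with $\langle\delta\mathcal E(0),v\rangle\le C\|Dv\|_2$ for all $v\in\mathscr W_0$. Then $\mathcal E(u):=\sum_{b\in\mathcal B}[\psi(D\hat y_b+Du_b)-\psi(D\hat y_b)]$, $\mathcal E:\mathscr W_0\to\mathbb R$, is continuous with respect to the norm $\|D\cdot\|_2$; hence there exists a unique continuous extension of $\mathcal E$ to $\dot{\mathscr W}^{1,2}$.
   Context: $\mathsf R_6$ rotation by $\pi/3$, $a_1=(1,0)^T$, $a_i=\mathsf R_6^{i-1}a_1$, $\Lambda:=(\tfrac12,\tfrac{\sqrt3}{6})^T+\{ma_1+na_2:m,n\in\mathbb Z\}$. Bonds $\mathcal B=\{(\xi,\eta)\in\Lambda^2:|\xi-\eta|=1\}$ (ordered), $Dy_b=y(\eta)-y(\xi)$, $\|Dv\|_2=(\sum_{b\in\mathcal B}|Dv_b|^2)^{1/2}$. $\xi_0=(0,\sqrt3/3)^T$; $\mathscr W_0=\{v:\Lambda\to\mathbb R: v(\xi_0)=0,\ \{b:Dv_b\neq0\}$ bounded$\}$; $\dot{\mathscr W}^{1,2}=\{v:v(\xi_0)=0,\ Dv\in\ell^2(\mathcal B)\}$, in which $\mathscr W_0$ is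 dense. The potential $\psi\in C(\mathbb R)\cap C^4(\mathbb R\setminus(\mathbb Z+\tfrac12))$ satisfies: ($\psi$1) 1-periodic; ($\psi$2) $\psi$ and $\psi(\tfrac12+\cdot)$ even; ($\psi$3) $\psi(r)=0$ iff $r\in\mathbb Z$; ($\psi$4) $\psi''(0)=\mu>0$; ($\psi$5) $\psi(x)\ge\frac12\psi''(0)x^2$ on $[-\frac12,\frac12]$. *)

theory Defs
  imports "HOL-Analysis.Analysis"
begin

type_synonym pt = "real \<times> real"

definition R6 :: "pt \<Rightarrow> pt" where
  "R6 p = (cos (pi/3) * fst p - sin (pi/3) * snd p, sin (pi/3) * fst p + cos (pi/3) * snd p)"

definition a1 :: pt where "a1 = (1, 0)"
definition a2 :: pt where "a2 = R6 a1"

definition Lam :: "pt set" where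
  "Lam = {(1/2, sqrt 3 / 6) + of_int m *\<^sub>R a1 + of_int n *\<^sub>R a2 | m n :: int. True}"

definition Bonds :: "(pt \<times> pt) set" where
  "Bonds = {(\<xi>, \<eta>). \<xi> \<in> Lam \<and> \<eta> \<in> Lam \<and> dist \<xi> \<eta> = 1}"

definition Dif :: "(pt \<Rightarrow> real) \<Rightarrow> pt \<times> pt \<Rightarrow> real" where
  "Dif y b = y (snd b) - y (fst b)"

definition normD :: "(pt \<Rightarrow> real) \<Rightarrow> real" where
  "normD v = sqrt (\<Sum>\<^sub>\<infinity> b\<in>Bonds. (Dif v b)\<^sup>2)"

definition xi0 :: pt where "xi0 = (0, sqrt 3 / 3)"

text \<open>Functions on the lattice are represented as functions on the plane vanishing off Lam.\<close>
definition W0 :: "(pt \<Rightarrow> real) set" where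
  "W0 = {v. (\<forall>x. x \<notin> Lam \<longrightarrow> v x = 0) \<and> v xi0 = 0 \<and> bounded {b \<in> Bonds. Dif v b \<noteq> 0}}"

definition W12 :: "(pt \<Rightarrow> real) set" where
  "W12 = {v. (\<forall>x. x \<notin> Lam \<longrightarrow> v x = 0) \<and> v xi0 = 0 \<and> (\<lambda>b. (Dif v b)\<^sup>2) summable_on Bonds}"

definition C4_on :: "real set \<Rightarrow> (real \<Rightarrow> real) \<Rightarrow> bool" where
  "C4_on S f \<longleftrightarrow> (\<forall>k<4. \<forall>x\<in>S. ((deriv ^^ k) f) differentiable (at x))
                  \<and> continuous_on S ((deriv ^^ 4) f)"

definition half_ints :: "real set" where
  "half_ints = {of_int k + 1/2 | k. True}"

definition energy :: "(real \<Rightarrow> real) \<Rightarrow> (pt \<Rightarrow> real) \<Rightarrow> (pt \<Rightarrow> real) \<Rightarrow> real" where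
  "energy \<psi> yhat u = (\<Sum>\<^sub>\<infinity> b\<in>Bonds. \<psi> (Dif yhat b + Dif u b) - \<psi> (Dif yhat b))"

definition dE0 :: "(real \<Rightarrow> real) \<Rightarrow> (pt \<Rightarrow> real) \<Rightarrow> (pt \<Rightarrow> real) \<Rightarrow> real" where
  "dE0 \<psi> yhat v = (\<Sum>\<^sub>\<infinity> b\<in>Bonds. deriv \<psi> (Dif yhat b) * Dif v b)"

definition contD_on :: "(pt \<Rightarrow> real) set \<Rightarrow> ((pt \<Rightarrow> real) \<Rightarrow> real) \<Rightarrow> bool" where
  "contD_on S F \<longleftrightarrow> (\<forall>u\<in>S. \<forall>e>0. \<exists>d>0. \<forall>w\<in>S. normD (w - u) < d \<longrightarrow> \<bar>F w - F u\<bar> < e)"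

end

theory Submission
  imports Defs
begin

text \<open>
  For \<open>w1, w2 \<in> W0\<close> the energy difference is the linear term \<open>\<langle>\<delta>E(0), w1 - w2\<rangle>\<close>, bounded by
  \<open>C \<parallel>D(w1 - w2)\<parallel>\<^sub>2\<close>, plus a sum of second-order remainders over the bonds. Every bond of \<open>\<hat>y\<close> keeps
  distance \<open>\<epsilon>\<close> from the singular set \<open>\<int> + 1/2\<close>, so by periodicity \<open>\<psi>\<close> is uniformly \<open>C\<^sup>2\<close> there:
  on bonds where \<open>Dw1\<close> and \<open>Dw2\<close> are small the remainder is quadratic and its sum is controlled by
  Cauchy-Schwarz, and on the at most \<open>8A\<^sup>2/\<epsilon>\<^sup>2\<close> other bonds (for \<open>\<parallel>Dw\<^sub>i\<parallel>\<^sub>2 \<le> A\<close>) the uniform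
  continuity of \<open>\<psi>\<close> suffices. Thus \<open>E\<close> is uniformly continuous on bounded subsets of \<open>W0\<close>, and it
  extends uniquely once \<open>W0\<close> is dense in \<open>W\<^sup>1\<^sup>,\<^sup>2\<close>. Density is the two-dimensional capacity
  argument: truncate \<open>u\<close> at a height \<open>M\<close> and multiply by a cutoff that equals 1 up to lattice radius
  \<open>K\<close>, vanishes beyond radius \<open>L\<close>, and decays like a logarithm in between, so that its Dirichlet
  energy is of order \<open>1 / log (L/K)\<close>.
\<close>

section \<open>The triangular lattice in integer coordinates\<close>

definition lat :: "int \<times> int \<Rightarrow> pt" where
  "lat p = (1/2, sqrt 3 / 6) + of_int (fst p) *\<^sub>R a1 + of_int (snd p) *\<^sub>R a2"

lemma fst_lat: "fst (lat p) = 1/2 + of_int (fst p) + of_int (snd p) / 2"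
  by (simp add: lat_def a1_def a2_def R6_def cos_60 sin_60)

lemma snd_lat: "snd (lat p) = sqrt 3 / 6 + of_int (snd p) * sqrt 3 / 2"
  by (simp add: lat_def a1_def a2_def R6_def cos_60 sin_60)

lemma Lam_eq_range_lat: "Lam = range lat"
proof
  show "Lam \<subseteq> range lat"
  proof
    fix x assume "x \<in> Lam"
    then obtain m n where "x = lat (m, n)" unfolding Lam_def lat_def by auto
    then show "x \<in> range lat" by simp
  qed
qed (auto simp: Lam_def lat_def)

lemma inj_lat: "inj lat"
proof (rule injI)
  fix p q assume eq: "lat p = lat q"
  have "of_int (snd p) * sqrt 3 / 2 = of_int (snd q) * sqrt 3 / 2"
    using arg_cong[OF eq, of snd] by (simp add: snd_lat)
  then have "snd p = snd q" by simp
  moreover from this have "fst p = fst q" using arg_cong[OF eq, of fst] by (simp add: fst_lat)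
  ultimately show "p = q" by (simp add: prod_eq_iff)
qed

lemma dist_lat_sq:
  "(dist (lat p) (lat q))\<^sup>2 = of_int ((fst q - fst p)\<^sup>2 + (fst q - fst p) * (snd q - snd p) + (snd q - snd p)\<^sup>2)"
proof -
  have "(dist (lat p) (lat q))\<^sup>2 = (fst (lat p) - fst (lat q))\<^sup>2 + (snd (lat p) - snd (lat q))\<^sup>2"
    using dist_Pair_Pair[of "fst (lat p)" "snd (lat p)" "fst (lat q)" "snd (lat q)"]
    by (simp add: dist_real_def)
  then show ?thesis by (simp add: fst_lat snd_lat power2_eq_square algebra_simps)
qed

text \<open>The nearest-neighbour steps \<open>\<plusminus>a1, \<plusminus>a2, \<plusminus>(a2 - a1)\<close> in lattice coordinates.\<close>
definition unit_steps :: "(int \<times> int) set" where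
  "unit_steps = {(1,0), (-1,0), (0,1), (0,-1), (-1,1), (1,-1)}"

lemma eisenstein_norm_eq_1_imp_unit_step:
  fixes m n :: int
  assumes "m\<^sup>2 + m * n + n\<^sup>2 = 1"
  shows "(m, n) \<in> unit_steps"
proof -
  have "(2 * m + n)\<^sup>2 + 3 * n\<^sup>2 = 4" using assms by (simp add: power2_eq_square algebra_simps)
  then have "n\<^sup>2 \<le> 1" by (smt (verit) zero_le_power2)
  then have "\<bar>n\<bar> \<le> 1" using abs_square_le_1 by blast
  then consider "n = 0" | "n = 1" | "n = -1" by linarith
  then show ?thesis
  proof cases
    case 1
    then have "m = 1 \<or> m = -1" using assms by (simp add: power2_eq_1_iff)
    then show ?thesis using 1 by (auto simp: unit_steps_def)
  next
    case 2
    then have "m * (m + 1) = 0" using assms by (simp add: power2_eq_square algebra_simps)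
    then have "m = 0 \<or> m = -1" by auto
    then show ?thesis using 2 by (auto simp: unit_steps_def)
  next
    case 3
    then have "m * (m - 1) = 0" using assms by (simp add: power2_eq_square algebra_simps)
    then have "m = 0 \<or> m = 1" by auto
    then show ?thesis using 3 by (auto simp: unit_steps_def)
  qed
qed

lemma Bonds_lat_step:
  assumes "b \<in> Bonds"
  obtains p d where "d \<in> unit_steps" "b = (lat p, lat (p + d))"
proof -
  obtain p q where b: "b = (lat p, lat q)" "dist (lat p) (lat q) = 1"
    using assms unfolding Bonds_def Lam_eq_range_lat by auto
  have "of_int ((fst q - fst p)\<^sup>2 + (fst q - fst p) * (snd q - snd p) + (snd q - snd p)\<^sup>2) = (1::real)"
    using dist_lat_sq[of p q] b(2) by simp
  then have "(fst q - fst p)\<^sup>2 + (fst q - fst p) * (snd q - snd p) + (snd q - snd p)\<^sup>2 = 1"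
    by linarith
  then have "(fst q - fst p, snd q - snd p) \<in> unit_steps" by (rule eisenstein_norm_eq_1_imp_unit_step)
  moreover have "q = p + (fst q - fst p, snd q - snd p)" by (simp add: prod_eq_iff)
  ultimately show thesis using b(1) that by metis
qed

lemma bounded_subset_Lam_finite:
  assumes "bounded S" "S \<subseteq> Lam"
  shows "finite S"
proof -
  obtain R where R: "\<And>x. x \<in> S \<Longrightarrow> norm x \<le> R" using assms(1) unfolding bounded_iff by blast
  define N where "N = \<lceil>3 * R + 3\<rceil>"
  have "S \<subseteq> lat ` ({-N..N} \<times> {-N..N})"
  proof
    fix x assume x: "x \<in> S"
    then obtain p where p: "x = lat p" using assms(2) unfolding Lam_eq_range_lat by auto
    have "\<bar>fst x\<bar> \<le> R" "\<bar>snd x\<bar> \<le> R"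
      using R[OF x] norm_fst_le[of "fst x" "snd x"] norm_snd_le[of "snd x" "fst x"] by simp_all
    moreover have "1 \<le> sqrt 3" "sqrt 3 \<le> 2" by (simp_all add: real_le_lsqrt)
    ultimately have "\<bar>of_int (snd p) * sqrt 3\<bar> \<le> 2 * R + 2"
      unfolding p snd_lat abs_le_iff by linarith
    then have "\<bar>of_int (snd p)\<bar> * sqrt 3 \<le> 2 * R + 2" by (simp add: abs_mult)
    moreover have "\<bar>of_int (snd p)\<bar> \<le> \<bar>of_int (snd p)\<bar> * sqrt 3"
      by (simp add: mult_le_cancel_left1)
    ultimately have "\<bar>of_int (snd p)\<bar> \<le> 2 * R + 2" "\<bar>of_int (fst p)\<bar> \<le> 3 * R + 3"
      using \<open>\<bar>fst x\<bar> \<le> R\<close> unfolding p fst_lat by linarith+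
    then have "\<bar>fst p\<bar> \<le> N" "\<bar>snd p\<bar> \<le> N" unfolding N_def by linarith+
    then have "p \<in> {-N..N} \<times> {-N..N}" by (simp add: mem_Times_iff abs_le_iff)
    then show "x \<in> lat ` ({-N..N} \<times> {-N..N})" using p by blast
  qed
  then show ?thesis by (rule finite_subset) simp
qed

lemma bounded_subset_Bonds_finite:
  assumes "bounded B" "B \<subseteq> Bonds"
  shows "finite B"
proof -
  have "bounded (fst ` B)" "bounded (snd ` B)"
    using assms(1) bounded_linear_image bounded_linear_fst bounded_linear_snd by blast+
  moreover have "fst ` B \<subseteq> Lam" "snd ` B \<subseteq> Lam" using assms(2) unfolding Bonds_def by auto
  ultimately have "finite (fst ` B \<times> snd ` B)" by (simp add: bounded_subset_Lam_finite)
  then show ?thesis using subset_fst_snd finite_subset by blast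
qed

lemma nonneg_finite_sums_le_imp_summable_on:
  fixes f :: "'a \<Rightarrow> real"
  assumes "\<And>x. x \<in> A \<Longrightarrow> f x \<ge> 0" "\<And>F. finite F \<Longrightarrow> F \<subseteq> A \<Longrightarrow> sum f F \<le> c"
  shows "f summable_on A" "infsum f A \<le> c"
proof -
  show "f summable_on A"
    using assms by (intro nonneg_bdd_above_summable_on) (auto simp: bdd_above_def)
  then show "infsum f A \<le> c" using assms(2) by (rule infsum_le_finite_sums)
qed

lemma Dif_diff [simp]: "Dif (f - g) b = Dif f b - Dif g b"
  and Dif_const [simp]: "Dif (\<lambda>_. c) b = 0"
  by (simp_all add: Dif_def)

definition D_square_summable :: "(pt \<Rightarrow> real) \<Rightarrow> bool" where
  "D_square_summable v \<longleftrightarrow> (\<lambda>b. (Dif v b)\<^sup>2) summable_on Bonds"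

lemma finite_bond_support_W0: "v \<in> W0 \<Longrightarrow> finite {b \<in> Bonds. Dif v b \<noteq> 0}"
  unfolding W0_def by (auto intro: bounded_subset_Bonds_finite)

lemma infsum_Bonds_finite_support:
  fixes g :: "pt \<times> pt \<Rightarrow> real"
  assumes "finite F" "F \<subseteq> Bonds" "\<And>b. b \<in> Bonds - F \<Longrightarrow> g b = 0"
  shows "infsum g Bonds = sum g F" "g summable_on Bonds"
proof -
  show "infsum g Bonds = sum g F"
    using assms by (subst infsum_cong_neutral[of F Bonds g g]) auto
  show "g summable_on Bonds"
    using assms summable_on_cong_neutral[of F Bonds g g] by auto
qed

lemma W0_diff: "u \<in> W0 \<Longrightarrow> v \<in> W0 \<Longrightarrow> u - v \<in> W0"
proof -
  assume u: "u \<in> W0" and v: "v \<in> W0"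
  have "bounded ({b \<in> Bonds. Dif u b \<noteq> 0} \<union> {b \<in> Bonds. Dif v b \<noteq> 0})"
    using u v unfolding W0_def by auto
  moreover have "{b \<in> Bonds. Dif (u - v) b \<noteq> 0} \<subseteq> {b \<in> Bonds. Dif u b \<noteq> 0} \<union> {b \<in> Bonds. Dif v b \<noteq> 0}"
    by auto
  ultimately have "bounded {b \<in> Bonds. Dif (u - v) b \<noteq> 0}" by (rule bounded_subset)
  then show ?thesis using u v unfolding W0_def by simp
qed

lemma zero_in_W0: "(\<lambda>_. 0) \<in> W0"
  unfolding W0_def by simp

lemma W0_D_square_summable: "v \<in> W0 \<Longrightarrow> D_square_summable v"
  unfolding D_square_summable_def
  by (rule infsum_Bonds_finite_support(2)[OF finite_bond_support_W0]) auto

lemma W0_subset_W12: "W0 \<subseteq> W12"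
  using W0_D_square_summable unfolding W0_def W12_def D_square_summable_def by auto

lemma W12_D_square_summable: "v \<in> W12 \<Longrightarrow> D_square_summable v"
  unfolding W12_def D_square_summable_def by auto

lemma normD_nonneg: "normD v \<ge> 0"
  unfolding normD_def by (intro real_sqrt_ge_zero infsum_nonneg) auto

lemma normD_minus_commute: "normD (u - v) = normD (v - u)"
  unfolding normD_def by (simp add: power2_commute)

lemma normD_diff_self [simp]: "normD (u - u) = 0"
  unfolding normD_def by simp

lemma L2_set_Dif_le_normD:
  assumes "D_square_summable v" "finite F" "F \<subseteq> Bonds"
  shows "L2_set (Dif v) F \<le> normD v"
  unfolding L2_set_def normD_def using assms unfolding D_square_summable_def
  by (intro real_sqrt_le_mono finite_sum_le_infsum) auto

lemma sum_Dif_sq_le_normD_sq: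
  assumes "D_square_summable v" "finite F" "F \<subseteq> Bonds"
  shows "(\<Sum>b\<in>F. (Dif v b)\<^sup>2) \<le> (normD v)\<^sup>2"
  using L2_set_Dif_le_normD[OF assms] unfolding L2_set_def by (rule sqrt_le_D)

lemma abs_Dif_le_normD:
  assumes "D_square_summable v" "b \<in> Bonds"
  shows "\<bar>Dif v b\<bar> \<le> normD v"
  using L2_set_Dif_le_normD[OF assms(1), of "{b}"] assms(2) by simp

lemma normD_le_if_L2_set_le:
  assumes "\<And>F. finite F \<Longrightarrow> F \<subseteq> Bonds \<Longrightarrow> L2_set (Dif v) F \<le> c"
  shows "D_square_summable v" "normD v \<le> c"
proof -
  have c: "c \<ge> 0" using assms[of "{}"] by simp
  have sums: "(\<Sum>b\<in>F. (Dif v b)\<^sup>2) \<le> c\<^sup>2" if "finite F" "F \<subseteq> Bonds" for F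
    using assms[OF that] unfolding L2_set_def by (rule sqrt_le_D)
  show "D_square_summable v"
    unfolding D_square_summable_def using sums by (intro nonneg_finite_sums_le_imp_summable_on) auto
  have "infsum (\<lambda>b. (Dif v b)\<^sup>2) Bonds \<le> c\<^sup>2"
    using sums by (intro nonneg_finite_sums_le_imp_summable_on) auto
  then have "normD v \<le> sqrt (c\<^sup>2)" unfolding normD_def by (rule real_sqrt_le_mono)
  then show "normD v \<le> c" using c by simp
qed

lemma normD_triangle:
  assumes "D_square_summable u" "D_square_summable v"
  shows "normD (u - v) \<le> normD u + normD v" "D_square_summable (u - v)"
proof -
  have L2: "L2_set (Dif (u - v)) F \<le> normD u + normD v" if "finite F" "F \<subseteq> Bonds" for F
  proof -
    have "Dif (u - v) = (\<lambda>b. Dif u b + - Dif v b)" by (simp add: fun_eq_iff)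
    then have "L2_set (Dif (u - v)) F \<le> L2_set (Dif u) F + L2_set (\<lambda>b. - Dif v b) F"
      using L2_set_triangle_ineq by metis
    also have "L2_set (\<lambda>b. - Dif v b) F = L2_set (Dif v) F" by (simp add: L2_set_def)
    also have "L2_set (Dif u) F + \<dots> \<le> normD u + normD v"
      using assms that by (intro add_mono L2_set_Dif_le_normD)
    finally show ?thesis .
  qed
  show "normD (u - v) \<le> normD u + normD v" "D_square_summable (u - v)"
    using normD_le_if_L2_set_le[OF L2] by auto
qed

lemma W12_diff: "u \<in> W12 \<Longrightarrow> v \<in> W12 \<Longrightarrow> u - v \<in> W12"
  using normD_triangle(2)[OF W12_D_square_summable W12_D_square_summable, of u v]
  unfolding W12_def D_square_summable_def by simp

lemma normD_diff_triangle:
  assumes "x \<in> W12" "y \<in> W12" "z \<in> W12"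
  shows "normD (x - z) \<le> normD (x - y) + normD (y - z)"
proof -
  have "x - z = (x - y) - (z - y)" by (simp add: fun_eq_iff)
  then show ?thesis
    using normD_triangle(1) W12_diff W12_D_square_summable normD_minus_commute assms by metis
qed

section \<open>The potential away from its singular set\<close>

lemma periodic_int_shift:
  fixes f :: "real \<Rightarrow> 'a"
  assumes "\<forall>x. f (x + 1) = f x"
  shows "f (x + of_int k) = f x"
proof -
  have nat_shift: "f (y + of_nat n) = f y" for y n
  proof (induction n)
    case (Suc n)
    have "y + of_nat (Suc n) = (y + of_nat n) + 1" by simp
    then show ?case using assms Suc by metis
  qed simp
  show ?thesis
  proof (cases "k \<ge> 0")
    case True
    then show ?thesis using nat_shift[of x "nat k"] by simp
  next
    case False
    then have "x = (x + of_int k) + of_nat (nat (- k))" by simp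
    then show ?thesis using nat_shift[of "x + of_int k" "nat (- k)"] by metis
  qed
qed

lemma deriv_periodic_int_shift:
  fixes f :: "real \<Rightarrow> real"
  assumes "\<forall>x. f (x + 1) = f x"
  shows "deriv f (x + of_int k) = deriv f x"
proof -
  have "(\<lambda>y. f (y + of_int k)) = f" using periodic_int_shift[OF assms] by auto
  then show ?thesis unfolding deriv_def using DERIV_shift[of f _ x "of_int k"] by simp
qed

lemma periodic_uniformly_continuous:
  fixes f :: "real \<Rightarrow> real"
  assumes "continuous_on UNIV f" "\<forall>x. f (x + 1) = f x"
  shows "uniformly_continuous_on UNIV f"
  unfolding uniformly_continuous_on_def
proof (intro allI impI)
  fix e :: real assume "e > 0"
  have "uniformly_continuous_on {-2..2} f"
    using assms(1) by (intro compact_uniformly_continuous) (auto intro: continuous_on_subset)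
  then obtain d where d: "d > 0" "\<forall>x\<in>{-2..2}. \<forall>x'\<in>{-2..2}. dist x' x < d \<longrightarrow> dist (f x') (f x) < e"
    using \<open>e > 0\<close> unfolding uniformly_continuous_on_def by blast
  have "dist (f x') (f x) < e" if "dist x' x < min d 1" for x x'
  proof -
    define k where "k = \<lfloor>x\<rfloor>"
    have "of_int k \<le> x" "x < of_int k + 1" unfolding k_def by linarith+
    then have "x - of_int k \<in> {-2..2}" "x' - of_int k \<in> {-2..2}"
      using that unfolding dist_real_def by auto
    then have "dist (f (x' - of_int k)) (f (x - of_int k)) < e"
      using d(2) that by (simp add: dist_real_def)
    then show ?thesis using periodic_int_shift[OF assms(2)] by (metis diff_add_cancel)
  qed
  then show "\<exists>d>0. \<forall>x\<in>UNIV. \<forall>x'\<in>UNIV. dist x' x < d \<longrightarrow> dist (f x') (f x) < e"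
    using d(1) by (intro exI[of _ "min d 1"]) auto
qed

lemma reduce_mod_1_away_from_half_ints:
  assumes "infdist a half_ints \<ge> \<epsilon>"
  obtains k :: int where "a - of_int k \<in> {-1/2 + \<epsilon> .. 1/2 - \<epsilon>}"
proof -
  define k where "k = \<lfloor>a + 1/2\<rfloor>"
  have "of_int (k - 1) + 1/2 \<in> half_ints" "of_int k + 1/2 \<in> half_ints"
    unfolding half_ints_def by blast+
  then have "\<epsilon> \<le> dist a (of_int (k - 1) + 1/2)" "\<epsilon> \<le> dist a (of_int k + 1/2)"
    using assms infdist_le[of _ half_ints a] by (meson order_trans)+
  then have "a - of_int k \<in> {-1/2 + \<epsilon> .. 1/2 - \<epsilon>}"
    unfolding k_def dist_real_def by (auto simp: abs_if split: if_splits) linarith+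
  then show thesis by (rule that)
qed

lemma interval_subset_compl_half_ints:
  assumes "\<delta> > 0"
  shows "{-1/2 + \<delta> .. 1/2 - \<delta>} \<subseteq> - half_ints"
proof
  fix x assume x: "x \<in> {-1/2 + \<delta> .. 1/2 - \<delta>}"
  show "x \<in> - half_ints"
  proof
    assume "x \<in> half_ints"
    then obtain j :: int where j: "x = of_int j + 1/2" unfolding half_ints_def by auto
    then have "-1 < (of_int j :: real)" "(of_int j :: real) < 0" using x assms by auto
    then show False by simp
  qed
qed

lemma C4_on_DERIV:
  assumes "C4_on S f" "x \<in> S"
  shows "DERIV f x :> deriv f x" "DERIV (deriv f) x :> deriv (deriv f) x"
    "isCont (deriv (deriv f)) x"
proof -
  have diff: "((deriv ^^ k) f) differentiable (at x)" if "k < 4" for k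
    using assms that unfolding C4_on_def by blast
  show "DERIV f x :> deriv f x" "DERIV (deriv f) x :> deriv (deriv f) x"
    using diff[of 0] diff[of 1] by (simp_all add: DERIV_deriv_iff_real_differentiable)
  show "isCont (deriv (deriv f)) x"
    using diff[of 2] by (simp add: numeral_2_eq_2 differentiable_imp_continuous_within)
qed

lemma deriv_bounded_away_from_half_ints:
  fixes \<psi> :: "real \<Rightarrow> real"
  assumes C4: "C4_on (- half_ints) \<psi>" and per: "\<forall>x. \<psi> (x + 1) = \<psi> x" and \<epsilon>: "\<epsilon> > 0"
  obtains M where "M \<ge> 0" "\<And>a. infdist a half_ints \<ge> \<epsilon> \<Longrightarrow> \<bar>deriv \<psi> a\<bar> \<le> M"
proof -
  define J where "J = {-1/2 + \<epsilon> .. 1/2 - \<epsilon>}"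
  have "continuous_on J (deriv \<psi>)"
    using C4_on_DERIV(2)[OF C4] interval_subset_compl_half_ints[OF \<epsilon>] unfolding J_def
    by (intro continuous_at_imp_continuous_on ballI DERIV_isCont) blast
  then obtain M where M: "M \<ge> 0" "\<And>x. x \<in> J \<Longrightarrow> norm (deriv \<psi> x) \<le> M"
    using continuous_on_compact_bound[of J "deriv \<psi>"] unfolding J_def by auto
  show thesis
  proof (rule that[OF M(1)])
    fix a assume "infdist a half_ints \<ge> \<epsilon>"
    then obtain k where "a - of_int k \<in> J" unfolding J_def by (rule reduce_mod_1_away_from_half_ints)
    then show "\<bar>deriv \<psi> a\<bar> \<le> M"
      using M(2) deriv_periodic_int_shift[OF per, of "a - of_int k" k] by simp
  qed
qed

lemma linearization_error_le:
  fixes f f' f'' :: "real \<Rightarrow> real"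
  assumes D1: "\<And>x. x \<in> {a - m .. a + m} \<Longrightarrow> DERIV f x :> f' x"
    and D2: "\<And>x. x \<in> {a - m .. a + m} \<Longrightarrow> DERIV f' x :> f'' x"
    and M: "\<And>x. x \<in> {a - m .. a + m} \<Longrightarrow> \<bar>f'' x\<bar> \<le> M"
    and t: "\<bar>t1\<bar> \<le> m" "\<bar>t2\<bar> \<le> m"
  shows "\<bar>f (a + t1) - f (a + t2) - f' a * (t1 - t2)\<bar> \<le> M * m * \<bar>t1 - t2\<bar>"
proof -
  define I where "I = {a - m .. a + m}"
  have cI: "convex I" unfolding I_def by (rule convex_real_interval)
  have aI: "a \<in> I" using t unfolding I_def by auto
  then have "M \<ge> 0" using M[of a] unfolding I_def by linarith
  have f'_near: "\<bar>f' x - f' a\<bar> \<le> M * m" if "x \<in> I" for x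
  proof -
    have "norm (f' x - f' a) \<le> M * norm (x - a)"
      using D2 M that aI unfolding I_def
      by (intro field_differentiable_bound[OF cI[unfolded I_def]]) (auto intro: has_field_derivative_at_within)
    also have "\<dots> \<le> M * m" using that \<open>M \<ge> 0\<close> unfolding I_def by (intro mult_left_mono) auto
    finally show ?thesis by simp
  qed
  define g where "g x = f x - f' a * x" for x
  have "(g has_field_derivative f' z - f' a) (at z within I)" if "z \<in> I" for z
  proof -
    have "DERIV g z :> f' z - f' a"
      using D1[of z] that unfolding g_def I_def by (auto intro!: derivative_eq_intros)
    then show ?thesis by (rule has_field_derivative_at_within)
  qed
  then have "norm (g (a + t1) - g (a + t2)) \<le> M * m * norm ((a + t1) - (a + t2))"
    using f'_near t by (intro field_differentiable_bound[OF cI]) (auto simp: I_def)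
  then show ?thesis by (simp add: g_def algebra_simps)
qed

lemma linearization_error_away_from_half_ints:
  fixes \<psi> :: "real \<Rightarrow> real"
  assumes C4: "C4_on (- half_ints) \<psi>" and per: "\<forall>x. \<psi> (x + 1) = \<psi> x" and \<epsilon>: "\<epsilon> > 0"
  obtains M where "M \<ge> 0"
    "\<And>a t1 t2. infdist a half_ints \<ge> \<epsilon> \<Longrightarrow> \<bar>t1\<bar> \<le> \<epsilon>/2 \<Longrightarrow> \<bar>t2\<bar> \<le> \<epsilon>/2 \<Longrightarrow>
       \<bar>\<psi> (a + t1) - \<psi> (a + t2) - deriv \<psi> a * (t1 - t2)\<bar> \<le> M * (\<bar>t1\<bar> + \<bar>t2\<bar>) * \<bar>t1 - t2\<bar>"
proof -
  define J where "J = {-1/2 + \<epsilon>/2 .. 1/2 - \<epsilon>/2}"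
  have "J \<subseteq> - half_ints" unfolding J_def using \<epsilon> by (intro interval_subset_compl_half_ints) simp
  then have D1: "DERIV \<psi> x :> deriv \<psi> x" and D2: "DERIV (deriv \<psi>) x :> deriv (deriv \<psi>) x"
    and "isCont (deriv (deriv \<psi>)) x" if "x \<in> J" for x
    using C4_on_DERIV[OF C4] that by blast+
  then have "continuous_on J (deriv (deriv \<psi>))" by (simp add: continuous_at_imp_continuous_on)
  then obtain M where M: "M \<ge> 0" "\<And>x. x \<in> J \<Longrightarrow> norm (deriv (deriv \<psi>) x) \<le> M"
    using continuous_on_compact_bound[of J "deriv (deriv \<psi>)"] unfolding J_def by auto
  show thesis
  proof (rule that[OF M(1)])
    fix a t1 t2 assume a: "infdist a half_ints \<ge> \<epsilon>" and t: "\<bar>t1\<bar> \<le> \<epsilon>/2" "\<bar>t2\<bar> \<le> \<epsilon>/2"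
    obtain k where k: "a - of_int k \<in> {-1/2 + \<epsilon> .. 1/2 - \<epsilon>}"
      using a by (rule reduce_mod_1_away_from_half_ints)
    define a' where "a' = a - of_int k"
    define m where "m = max \<bar>t1\<bar> \<bar>t2\<bar>"
    have "{a' - m .. a' + m} \<subseteq> J" using k t unfolding a'_def J_def m_def by auto
    then have "\<bar>\<psi> (a' + t1) - \<psi> (a' + t2) - deriv \<psi> a' * (t1 - t2)\<bar> \<le> M * m * \<bar>t1 - t2\<bar>"
      using D1 D2 M(2) unfolding m_def
      by (intro linearization_error_le[where f''="deriv (deriv \<psi>)"]) auto
    also have "\<dots> \<le> M * (\<bar>t1\<bar> + \<bar>t2\<bar>) * \<bar>t1 - t2\<bar>"
      using M(1) unfolding m_def by (intro mult_right_mono mult_left_mono) auto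
    moreover have "\<psi> (a + t) = \<psi> (a' + t)" for t
      using periodic_int_shift[OF per, of "a' + t" k] unfolding a'_def by (simp add: algebra_simps)
    moreover have "deriv \<psi> a = deriv \<psi> a'"
      using deriv_periodic_int_shift[OF per, of a' k] unfolding a'_def by simp
    ultimately show "\<bar>\<psi> (a + t1) - \<psi> (a + t2) - deriv \<psi> a * (t1 - t2)\<bar> \<le> M * (\<bar>t1\<bar> + \<bar>t2\<bar>) * \<bar>t1 - t2\<bar>"
      by simp
  qed
qed

section \<open>Continuity estimates for the energy on W0\<close>

lemma energy_finite_support:
  assumes "finite F" "{b \<in> Bonds. Dif v b \<noteq> 0} \<subseteq> F" "F \<subseteq> Bonds"
  shows "energy \<psi> y v = (\<Sum>b\<in>F. \<psi> (Dif y b + Dif v b) - \<psi> (Dif y b))"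
  unfolding energy_def using assms by (intro infsum_Bonds_finite_support(1)) auto

lemma dE0_finite_support:
  assumes "finite F" "{b \<in> Bonds. Dif v b \<noteq> 0} \<subseteq> F" "F \<subseteq> Bonds"
  shows "dE0 \<psi> y v = (\<Sum>b\<in>F. deriv \<psi> (Dif y b) * Dif v b)"
  unfolding dE0_def using assms by (intro infsum_Bonds_finite_support(1)) auto

lemma card_large_Dif_le:
  assumes "D_square_summable v" "finite F" "F \<subseteq> Bonds" "\<delta> > 0"
  shows "real (card {b \<in> F. \<delta> < \<bar>Dif v b\<bar>}) * \<delta>\<^sup>2 \<le> (normD v)\<^sup>2"
proof -
  let ?G = "{b \<in> F. \<delta> < \<bar>Dif v b\<bar>}"
  have "real (card ?G) * \<delta>\<^sup>2 = (\<Sum>b\<in>?G. \<delta>\<^sup>2)" by simp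
  also have "\<dots> \<le> (\<Sum>b\<in>?G. (Dif v b)\<^sup>2)"
    using assms(4) by (intro sum_mono) (simp add: abs_le_square_iff[symmetric])
  also have "\<dots> \<le> (\<Sum>b\<in>F. (Dif v b)\<^sup>2)" using assms(2) by (intro sum_mono2) auto
  also have "\<dots> \<le> (normD v)\<^sup>2" using assms(1-3) by (rule sum_Dif_sq_le_normD_sq)
  finally show ?thesis .
qed

lemma dE0_minus_commute: "dE0 \<psi> y (u - v) = - dE0 \<psi> y (v - u)"
  unfolding dE0_def by (simp add: infsum_uminus[symmetric] algebra_simps)

lemma abs_dE0_le:
  assumes C: "\<forall>v\<in>W0. dE0 \<psi> y v \<le> C * normD v" and v: "v \<in> W0"
  shows "\<bar>dE0 \<psi> y v\<bar> \<le> \<bar>C\<bar> * normD v"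
proof -
  have minus: "(\<lambda>_. 0) - v \<in> W0" using W0_diff[OF zero_in_W0 v] .
  have "v - (\<lambda>_. 0) = v" by (simp add: fun_eq_iff)
  then have "dE0 \<psi> y v \<le> C * normD v" "- dE0 \<psi> y v \<le> C * normD v"
    using C v minus dE0_minus_commute[of \<psi> y "\<lambda>_. 0" v] normD_minus_commute[of "\<lambda>_. 0" v] by auto
  moreover have "C * normD v \<le> \<bar>C\<bar> * normD v" using normD_nonneg[of v] by (intro mult_right_mono) auto
  ultimately show ?thesis by linarith
qed

lemma energy_diff_eq_dE0_plus_remainder:
  assumes "finite F" "F \<subseteq> Bonds" "{b \<in> Bonds. Dif w1 b \<noteq> 0} \<subseteq> F" "{b \<in> Bonds. Dif w2 b \<noteq> 0} \<subseteq> F"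
  shows "energy \<psi> y w1 - energy \<psi> y w2 = dE0 \<psi> y (w1 - w2)
    + (\<Sum>b\<in>F. \<psi> (Dif y b + Dif w1 b) - \<psi> (Dif y b + Dif w2 b) - deriv \<psi> (Dif y b) * Dif (w1 - w2) b)"
proof -
  have "{b \<in> Bonds. Dif (w1 - w2) b \<noteq> 0} \<subseteq> F" using assms(3,4) by fastforce
  then have "dE0 \<psi> y (w1 - w2) = (\<Sum>b\<in>F. deriv \<psi> (Dif y b) * Dif (w1 - w2) b)"
    using dE0_finite_support[OF assms(1) _ assms(2)] by blast
  moreover have "energy \<psi> y w1 - energy \<psi> y w2
      = (\<Sum>b\<in>F. \<psi> (Dif y b + Dif w1 b) - \<psi> (Dif y b + Dif w2 b))"
    using energy_finite_support[OF assms(1,3,2)] energy_finite_support[OF assms(1,4,2)]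
    by (simp add: sum_subtractf[symmetric])
  ultimately show ?thesis by (simp add: sum_subtractf)
qed

lemma linearization_error_bond:
  fixes \<psi> :: "real \<Rightarrow> real"
  assumes der: "\<And>a. infdist a half_ints \<ge> \<epsilon> \<Longrightarrow> \<bar>deriv \<psi> a\<bar> \<le> M1"
    and lin: "\<And>a t1 t2. infdist a half_ints \<ge> \<epsilon> \<Longrightarrow> \<bar>t1\<bar> \<le> \<epsilon>/2 \<Longrightarrow> \<bar>t2\<bar> \<le> \<epsilon>/2 \<Longrightarrow>
       \<bar>\<psi> (a + t1) - \<psi> (a + t2) - deriv \<psi> a * (t1 - t2)\<bar> \<le> M2 * (\<bar>t1\<bar> + \<bar>t2\<bar>) * \<bar>t1 - t2\<bar>"
    and modulus: "\<And>x y. \<bar>x - y\<bar> < \<rho> \<Longrightarrow> \<bar>\<psi> x - \<psi> y\<bar> < \<eta>"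
    and a: "infdist a half_ints \<ge> \<epsilon>" and t: "\<bar>t1 - t2\<bar> < \<rho>" "\<bar>t1 - t2\<bar> \<le> r"
    and M: "M1 \<ge> 0" "M2 \<ge> 0"
  shows "\<bar>\<psi> (a + t1) - \<psi> (a + t2) - deriv \<psi> a * (t1 - t2)\<bar>
    \<le> M2 * ((\<bar>t1\<bar> + \<bar>t2\<bar>) * \<bar>t1 - t2\<bar>) + (if \<epsilon>/2 < \<bar>t1\<bar> \<or> \<epsilon>/2 < \<bar>t2\<bar> then \<eta> + M1 * r else 0)"
proof (cases "\<epsilon>/2 < \<bar>t1\<bar> \<or> \<epsilon>/2 < \<bar>t2\<bar>")
  case True
  have "\<bar>\<psi> (a + t1) - \<psi> (a + t2)\<bar> < \<eta>" using t(1) by (intro modulus) simp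
  moreover have "\<bar>deriv \<psi> a * (t1 - t2)\<bar> \<le> M1 * r"
    unfolding abs_mult using der[OF a] t(2) M(1) by (intro mult_mono) auto
  moreover have "0 \<le> M2 * ((\<bar>t1\<bar> + \<bar>t2\<bar>) * \<bar>t1 - t2\<bar>)" using M(2) by simp
  ultimately show ?thesis using True by simp
next
  case False
  then show ?thesis using lin[OF a] by (simp add: mult.assoc)
qed

lemma card_large_Dif_pair_le:
  assumes "D_square_summable w1" "D_square_summable w2" "normD w1 \<le> A" "normD w2 \<le> A"
    and "finite F" "F \<subseteq> Bonds" "\<epsilon> > 0"
  shows "real (card {b \<in> F. \<epsilon>/2 < \<bar>Dif w1 b\<bar> \<or> \<epsilon>/2 < \<bar>Dif w2 b\<bar>}) \<le> 8 * A\<^sup>2 / \<epsilon>\<^sup>2"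
proof -
  have sq: "(normD w)\<^sup>2 \<le> A\<^sup>2" if "normD w \<le> A" for w
    using that normD_nonneg[of w] by (intro power_mono) auto
  have "{b \<in> F. \<epsilon>/2 < \<bar>Dif w1 b\<bar> \<or> \<epsilon>/2 < \<bar>Dif w2 b\<bar>}
      = {b \<in> F. \<epsilon>/2 < \<bar>Dif w1 b\<bar>} \<union> {b \<in> F. \<epsilon>/2 < \<bar>Dif w2 b\<bar>}" by auto
  then have "real (card {b \<in> F. \<epsilon>/2 < \<bar>Dif w1 b\<bar> \<or> \<epsilon>/2 < \<bar>Dif w2 b\<bar>}) * (\<epsilon>/2)\<^sup>2
      \<le> (real (card {b \<in> F. \<epsilon>/2 < \<bar>Dif w1 b\<bar>}) + real (card {b \<in> F. \<epsilon>/2 < \<bar>Dif w2 b\<bar>})) * (\<epsilon>/2)\<^sup>2"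
    by (intro mult_right_mono) (simp_all add: card_Un_le flip: of_nat_add)
  also have "\<dots> \<le> A\<^sup>2 + A\<^sup>2"
    unfolding distrib_right using assms sq
    by (intro add_mono order_trans[OF card_large_Dif_le]) auto
  finally show ?thesis using assms(7) by (simp add: field_simps power2_eq_square)
qed

lemma sum_cross_Dif_le:
  assumes "D_square_summable w1" "D_square_summable w2" "D_square_summable h"
    and "normD w1 \<le> A" "normD w2 \<le> A" "finite F" "F \<subseteq> Bonds"
  shows "(\<Sum>b\<in>F. (\<bar>Dif w1 b\<bar> + \<bar>Dif w2 b\<bar>) * \<bar>Dif h b\<bar>) \<le> 2 * A * normD h"
proof -
  have "(\<Sum>b\<in>F. (\<bar>Dif w1 b\<bar> + \<bar>Dif w2 b\<bar>) * \<bar>Dif h b\<bar>)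
      = (\<Sum>b\<in>F. \<bar>Dif w1 b\<bar> * \<bar>Dif h b\<bar>) + (\<Sum>b\<in>F. \<bar>Dif w2 b\<bar> * \<bar>Dif h b\<bar>)"
    by (simp add: distrib_right sum.distrib)
  also have "\<dots> \<le> L2_set (Dif w1) F * L2_set (Dif h) F + L2_set (Dif w2) F * L2_set (Dif h) F"
    by (intro add_mono L2_set_mult_ineq)
  also have "\<dots> \<le> A * normD h + A * normD h"
    using assms L2_set_Dif_le_normD normD_nonneg[of w1]
    by (intro add_mono mult_mono) (auto intro: order_trans)
  finally show ?thesis by simp
qed

lemma energy_diff_estimate:
  fixes \<psi> :: "real \<Rightarrow> real" and yhat w1 w2 :: "pt \<Rightarrow> real"
  assumes der: "\<And>a. infdist a half_ints \<ge> \<epsilon> \<Longrightarrow> \<bar>deriv \<psi> a\<bar> \<le> M1"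
    and lin: "\<And>a t1 t2. infdist a half_ints \<ge> \<epsilon> \<Longrightarrow> \<bar>t1\<bar> \<le> \<epsilon>/2 \<Longrightarrow> \<bar>t2\<bar> \<le> \<epsilon>/2 \<Longrightarrow>
       \<bar>\<psi> (a + t1) - \<psi> (a + t2) - deriv \<psi> a * (t1 - t2)\<bar> \<le> M2 * (\<bar>t1\<bar> + \<bar>t2\<bar>) * \<bar>t1 - t2\<bar>"
    and modulus: "\<And>x y. \<bar>x - y\<bar> < \<rho> \<Longrightarrow> \<bar>\<psi> x - \<psi> y\<bar> < \<eta>"
    and M: "M1 \<ge> 0" "M2 \<ge> 0" and \<epsilon>: "\<epsilon> > 0"
    and yhat: "\<forall>b\<in>Bonds. infdist (Dif yhat b) half_ints \<ge> \<epsilon>"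
    and C: "\<forall>v\<in>W0. dE0 \<psi> yhat v \<le> C * normD v"
    and w: "w1 \<in> W0" "w2 \<in> W0" "normD w1 \<le> A" "normD w2 \<le> A" "normD (w1 - w2) < \<rho>"
  shows "\<bar>energy \<psi> yhat w1 - energy \<psi> yhat w2\<bar>
    \<le> (\<bar>C\<bar> + 2 * A * M2 + 8 * A\<^sup>2 / \<epsilon>\<^sup>2 * M1) * normD (w1 - w2) + 8 * A\<^sup>2 / \<epsilon>\<^sup>2 * \<eta>"
proof -
  define h where "h = w1 - w2"
  define F where "F = {b \<in> Bonds. Dif w1 b \<noteq> 0} \<union> {b \<in> Bonds. Dif w2 b \<noteq> 0}"
  define R where "R b = \<psi> (Dif yhat b + Dif w1 b) - \<psi> (Dif yhat b + Dif w2 b)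
    - deriv \<psi> (Dif yhat b) * Dif h b" for b
  define big where "big = {b \<in> F. \<epsilon>/2 < \<bar>Dif w1 b\<bar> \<or> \<epsilon>/2 < \<bar>Dif w2 b\<bar>}"
  have F: "finite F" "F \<subseteq> Bonds" using finite_bond_support_W0 w(1,2) unfolding F_def by auto
  have "h \<in> W0" using W0_diff w unfolding h_def by auto
  then have sq: "D_square_summable w1" "D_square_summable w2" "D_square_summable h"
    using W0_D_square_summable w by auto
  have "energy \<psi> yhat w1 - energy \<psi> yhat w2 = dE0 \<psi> yhat h + (\<Sum>b\<in>F. R b)"
    unfolding R_def h_def using F by (intro energy_diff_eq_dE0_plus_remainder) (auto simp: F_def)
  then have "\<bar>energy \<psi> yhat w1 - energy \<psi> yhat w2\<bar> \<le> \<bar>dE0 \<psi> yhat h\<bar> + (\<Sum>b\<in>F. \<bar>R b\<bar>)"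
    using abs_triangle_ineq[of "dE0 \<psi> yhat h" "\<Sum>b\<in>F. R b"] sum_abs[of R F] by linarith
  also have "\<bar>dE0 \<psi> yhat h\<bar> \<le> \<bar>C\<bar> * normD h" using C \<open>h \<in> W0\<close> by (rule abs_dE0_le)
  also have "(\<Sum>b\<in>F. \<bar>R b\<bar>) \<le> (\<Sum>b\<in>F. M2 * ((\<bar>Dif w1 b\<bar> + \<bar>Dif w2 b\<bar>) * \<bar>Dif h b\<bar>)
      + (if b \<in> big then \<eta> + M1 * normD h else 0))"
  proof (rule sum_mono)
    fix b assume b: "b \<in> F"
    have hb: "\<bar>Dif w1 b - Dif w2 b\<bar> \<le> normD h"
      using abs_Dif_le_normD[OF sq(3), of b] F(2) b unfolding h_def by auto
    then have "\<bar>Dif w1 b - Dif w2 b\<bar> < \<rho>" using w(5) unfolding h_def by linarith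
    moreover have "infdist (Dif yhat b) half_ints \<ge> \<epsilon>" using yhat b F(2) by auto
    ultimately show "\<bar>R b\<bar> \<le> M2 * ((\<bar>Dif w1 b\<bar> + \<bar>Dif w2 b\<bar>) * \<bar>Dif h b\<bar>)
        + (if b \<in> big then \<eta> + M1 * normD h else 0)"
      using linearization_error_bond[OF der lin modulus _ _ hb M] b
      unfolding R_def big_def h_def by simp
  qed
  also have "\<dots> = M2 * (\<Sum>b\<in>F. (\<bar>Dif w1 b\<bar> + \<bar>Dif w2 b\<bar>) * \<bar>Dif h b\<bar>)
      + real (card big) * (\<eta> + M1 * normD h)"
    using F(1) unfolding big_def by (simp add: sum.distrib sum_distrib_left sum.If_cases Int_def)
  also have "\<dots> \<le> M2 * (2 * A * normD h) + 8 * A\<^sup>2 / \<epsilon>\<^sup>2 * (\<eta> + M1 * normD h)"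
  proof (intro add_mono mult_left_mono mult_right_mono)
    show "(\<Sum>b\<in>F. (\<bar>Dif w1 b\<bar> + \<bar>Dif w2 b\<bar>) * \<bar>Dif h b\<bar>) \<le> 2 * A * normD h"
      using sq w F by (intro sum_cross_Dif_le)
    show "real (card big) \<le> 8 * A\<^sup>2 / \<epsilon>\<^sup>2"
      unfolding big_def using sq w F \<epsilon> by (intro card_large_Dif_pair_le)
    have "\<eta> > 0" using modulus[of 0 0] w(5) normD_nonneg[of "w1 - w2"] by simp
    then show "0 \<le> \<eta> + M1 * normD h" using M normD_nonneg[of h] by simp
  qed (use M in auto)
  finally show ?thesis unfolding h_def[symmetric] by (simp add: algebra_simps add_divide_distrib)
qed

lemma normD_le_of_near:
  assumes "w \<in> W12" "u \<in> W12" "normD (w - u) \<le> 1"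
  shows "normD w \<le> normD u + 1"
proof -
  have "(\<lambda>_. 0::real) \<in> W12" using zero_in_W0 W0_subset_W12 by blast
  then have "normD (w - (\<lambda>_. 0)) \<le> normD (w - u) + normD (u - (\<lambda>_. 0))"
    using assms by (intro normD_diff_triangle)
  moreover have "v - (\<lambda>_. 0) = v" for v :: "pt \<Rightarrow> real" by (simp add: fun_eq_iff)
  ultimately show ?thesis using assms(3) by simp
qed

lemma energy_diff_bound_on_ball:
  fixes \<psi> :: "real \<Rightarrow> real" and \<epsilon> :: real and yhat :: "pt \<Rightarrow> real"
  assumes psi_cont: "continuous_on UNIV \<psi>" and C4: "C4_on (- half_ints) \<psi>"
    and per: "\<forall>x. \<psi> (x + 1) = \<psi> x"
    and \<epsilon>: "\<epsilon> > 0" and yhat: "\<forall>b\<in>Bonds. infdist (Dif yhat b) half_ints \<ge> \<epsilon>"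
    and C: "\<forall>v\<in>W0. dE0 \<psi> yhat v \<le> C * normD v" and A: "A \<ge> 0"
  obtains K N where "K \<ge> 0" "N \<ge> 0"
    "\<And>\<eta>. \<eta> > 0 \<Longrightarrow> \<exists>\<rho>>0. \<forall>w1\<in>W0. \<forall>w2\<in>W0. normD w1 \<le> A \<longrightarrow> normD w2 \<le> A \<longrightarrow>
       normD (w1 - w2) < \<rho> \<longrightarrow>
       \<bar>energy \<psi> yhat w1 - energy \<psi> yhat w2\<bar> \<le> K * normD (w1 - w2) + N * \<eta>"
proof -
  obtain M1 where M1: "M1 \<ge> 0" "\<And>a. infdist a half_ints \<ge> \<epsilon> \<Longrightarrow> \<bar>deriv \<psi> a\<bar> \<le> M1"
    using deriv_bounded_away_from_half_ints[OF C4 per \<epsilon>] by blast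
  obtain M2 where M2: "M2 \<ge> 0" "\<And>a t1 t2. infdist a half_ints \<ge> \<epsilon> \<Longrightarrow> \<bar>t1\<bar> \<le> \<epsilon>/2 \<Longrightarrow> \<bar>t2\<bar> \<le> \<epsilon>/2 \<Longrightarrow>
       \<bar>\<psi> (a + t1) - \<psi> (a + t2) - deriv \<psi> a * (t1 - t2)\<bar> \<le> M2 * (\<bar>t1\<bar> + \<bar>t2\<bar>) * \<bar>t1 - t2\<bar>"
    using linearization_error_away_from_half_ints[OF C4 per \<epsilon>] by blast
  show thesis
  proof (rule that)
    show "\<bar>C\<bar> + 2 * A * M2 + 8 * A\<^sup>2 / \<epsilon>\<^sup>2 * M1 \<ge> 0" "8 * A\<^sup>2 / \<epsilon>\<^sup>2 \<ge> 0"
      using M1(1) M2(1) A by (intro add_nonneg_nonneg mult_nonneg_nonneg) auto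
  next
    fix \<eta> :: real assume "\<eta> > 0"
    then obtain \<rho> where "\<rho> > 0" and \<rho>: "\<forall>x\<in>UNIV. \<forall>y\<in>UNIV. dist y x < \<rho> \<longrightarrow> dist (\<psi> y) (\<psi> x) < \<eta>"
      using periodic_uniformly_continuous[OF psi_cont per, unfolded uniformly_continuous_on_def,
        THEN spec, THEN mp] by blast
    then have "\<And>x y. \<bar>x - y\<bar> < \<rho> \<Longrightarrow> \<bar>\<psi> x - \<psi> y\<bar> < \<eta>" by (simp add: dist_real_def)
    then show "\<exists>\<rho>>0. \<forall>w1\<in>W0. \<forall>w2\<in>W0. normD w1 \<le> A \<longrightarrow> normD w2 \<le> A \<longrightarrow> normD (w1 - w2) < \<rho> \<longrightarrow>
       \<bar>energy \<psi> yhat w1 - energy \<psi> yhat w2\<bar>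
       \<le> (\<bar>C\<bar> + 2 * A * M2 + 8 * A\<^sup>2 / \<epsilon>\<^sup>2 * M1) * normD (w1 - w2) + 8 * A\<^sup>2 / \<epsilon>\<^sup>2 * \<eta>"
      using energy_diff_estimate[OF M1(2) M2(2) _ M1(1) M2(1) \<epsilon> yhat C] \<open>\<rho> > 0\<close> by blast
  qed
qed

lemma energy_locally_uniformly_continuous:
  fixes \<psi> :: "real \<Rightarrow> real" and \<epsilon> :: real and yhat :: "pt \<Rightarrow> real"
  assumes psi_cont: "continuous_on UNIV \<psi>" and C4: "C4_on (- half_ints) \<psi>"
    and per: "\<forall>x. \<psi> (x + 1) = \<psi> x"
    and \<epsilon>: "\<epsilon> > 0" and yhat: "\<forall>b\<in>Bonds. infdist (Dif yhat b) half_ints \<ge> \<epsilon>"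
    and C: "\<forall>v\<in>W0. dE0 \<psi> yhat v \<le> C * normD v"
    and u: "u \<in> W12" and e: "e > 0"
  shows "\<exists>d>0. \<forall>w1\<in>W0. \<forall>w2\<in>W0. normD (w1 - u) < d \<longrightarrow> normD (w2 - u) < d \<longrightarrow>
           \<bar>energy \<psi> yhat w1 - energy \<psi> yhat w2\<bar> < e"
proof -
  define A where "A = normD u + 1"
  have "A \<ge> 0" unfolding A_def using normD_nonneg[of u] by simp
  obtain K N where "K \<ge> 0" "N \<ge> 0" and KN: "\<And>\<eta>. \<eta> > 0 \<Longrightarrow> \<exists>\<rho>>0. \<forall>w1\<in>W0. \<forall>w2\<in>W0.
       normD w1 \<le> A \<longrightarrow> normD w2 \<le> A \<longrightarrow> normD (w1 - w2) < \<rho> \<longrightarrow>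
       \<bar>energy \<psi> yhat w1 - energy \<psi> yhat w2\<bar> \<le> K * normD (w1 - w2) + N * \<eta>"
    using energy_diff_bound_on_ball[OF psi_cont C4 per \<epsilon> yhat C \<open>A \<ge> 0\<close>] by blast
  define \<eta> where "\<eta> = e / (2 * (N + 1))"
  have "\<eta> > 0" using e \<open>N \<ge> 0\<close> unfolding \<eta>_def by simp
  then obtain \<rho> where "\<rho> > 0" and \<rho>: "\<forall>w1\<in>W0. \<forall>w2\<in>W0. normD w1 \<le> A \<longrightarrow> normD w2 \<le> A \<longrightarrow>
      normD (w1 - w2) < \<rho> \<longrightarrow> \<bar>energy \<psi> yhat w1 - energy \<psi> yhat w2\<bar> \<le> K * normD (w1 - w2) + N * \<eta>"
    using KN by blast
  define d where "d = min (1/2) (min (\<rho>/2) (e / (4 * (K + 1))))"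
  have "d > 0" unfolding d_def using \<open>\<rho> > 0\<close> e \<open>K \<ge> 0\<close> by simp
  have "\<bar>energy \<psi> yhat w1 - energy \<psi> yhat w2\<bar> < e"
    if w: "w1 \<in> W0" "w2 \<in> W0" "normD (w1 - u) < d" "normD (w2 - u) < d" for w1 w2
  proof -
    have W12: "w1 \<in> W12" "w2 \<in> W12" using w W0_subset_W12 by auto
    have "normD (w1 - w2) \<le> normD (w1 - u) + normD (u - w2)"
      using W12 u by (intro normD_diff_triangle)
    then have h: "normD (w1 - w2) < 2 * d" using w normD_minus_commute[of u w2] by linarith
    have "normD w1 \<le> A" "normD w2 \<le> A"
      using normD_le_of_near[OF W12(1) u] normD_le_of_near[OF W12(2) u] w \<open>d > 0\<close>
      unfolding A_def d_def by auto
    moreover have "normD (w1 - w2) < \<rho>" using h unfolding d_def by linarith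
    ultimately have "\<bar>energy \<psi> yhat w1 - energy \<psi> yhat w2\<bar> \<le> K * normD (w1 - w2) + N * \<eta>"
      using \<rho> w(1,2) by blast
    also have "K * normD (w1 - w2) \<le> K * (e / (2 * (K + 1)))"
    proof -
      have "d \<le> e / (4 * (K + 1))" unfolding d_def by simp
      then have "2 * d \<le> e / (2 * (K + 1))" using \<open>K \<ge> 0\<close> by (simp add: field_simps)
      then show ?thesis using h \<open>K \<ge> 0\<close> by (intro mult_left_mono) auto
    qed
    also have "K * (e / (2 * (K + 1))) + N * \<eta> < e / 2 + e / 2"
    proof (rule add_strict_mono)
      have "K + 1 > 0" "N + 1 > 0" using \<open>K \<ge> 0\<close> \<open>N \<ge> 0\<close> by linarith+
      then show "K * (e / (2 * (K + 1))) < e / 2" "N * \<eta> < e / 2"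
        unfolding \<eta>_def using e by (simp_all add: field_simps)
    qed
    finally show ?thesis by simp
  qed
  then show ?thesis using \<open>d > 0\<close> by blast
qed

section \<open>Density of W0 in W12\<close>

definition lat_radius :: "int \<times> int \<Rightarrow> nat" where
  "lat_radius p = nat (max \<bar>fst p\<bar> \<bar>snd p\<bar>)"

lemma lat_radius_add_unit_step:
  assumes "d \<in> unit_steps"
  shows "lat_radius (p + d) \<le> lat_radius p + 1" "lat_radius p \<le> lat_radius (p + d) + 1"
  using assms unfolding unit_steps_def lat_radius_def by auto

lemma card_lat_radius_eq_le: "card {p \<in> S. lat_radius p = k} \<le> 8 * k + 4"
proof -
  define k' where "k' = int k"
  let ?A = "{-k', k'} \<times> {-k'..k'}" and ?B = "{-k'..k'} \<times> {-k', k'}"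
  have "{p \<in> S. lat_radius p = k} \<subseteq> ?A \<union> ?B"
  proof
    fix p assume "p \<in> {p \<in> S. lat_radius p = k}"
    then have "max \<bar>fst p\<bar> \<bar>snd p\<bar> = k'" unfolding lat_radius_def k'_def by auto
    then show "p \<in> ?A \<union> ?B" by (cases p) (auto simp: max_def abs_if split: if_splits)
  qed
  then have "card {p \<in> S. lat_radius p = k} \<le> card (?A \<union> ?B)" by (rule card_mono[rotated]) simp
  also have "\<dots> \<le> card ?A + card ?B" by (rule card_Un_le)
  also have "\<dots> \<le> 2 * (2 * k + 1) + (2 * k + 1) * 2"
  proof -
    have "card {-k', k'} \<le> 2" by (rule card_insert_le_m1) auto
    moreover have "card {-k'..k'} = 2 * k + 1" unfolding k'_def by simp
    ultimately show ?thesis unfolding card_cartesian_product by (intro add_mono mult_le_mono) auto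
  qed
  finally show ?thesis by simp
qed

lemma sum_lat_radius_le_shells:
  fixes c :: "nat \<Rightarrow> real"
  assumes "finite P" "\<And>k. c k \<ge> 0" "\<And>k. k \<notin> {K..L} \<Longrightarrow> c k = 0"
  shows "(\<Sum>p\<in>P. c (lat_radius p)) \<le> (\<Sum>k\<in>{K..L}. (8 * real k + 4) * c k)"
proof -
  have "(\<Sum>p\<in>P. c (lat_radius p)) = (\<Sum>k\<in>lat_radius ` P. real (card {p \<in> P. lat_radius p = k}) * c k)"
    using assms(1) by (subst sum.group[symmetric, of P "lat_radius ` P" lat_radius]) auto
  also have "\<dots> \<le> (\<Sum>k\<in>lat_radius ` P. (8 * real k + 4) * c k)"
  proof (intro sum_mono mult_right_mono assms(2))
    fix k
    have "real (card {p \<in> P. lat_radius p = k}) \<le> real (8 * k + 4)" by (rule of_nat_mono[OF card_lat_radius_eq_le])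
    then show "real (card {p \<in> P. lat_radius p = k}) \<le> 8 * real k + 4" by simp
  qed
  also have "\<dots> \<le> (\<Sum>k\<in>lat_radius ` P \<union> {K..L}. (8 * real k + 4) * c k)"
    using assms(1,2) by (intro sum_mono2) auto
  also have "\<dots> = (\<Sum>k\<in>{K..L}. (8 * real k + 4) * c k)"
    using assms(1,3) by (intro sum.mono_neutral_right) auto
  finally show ?thesis .
qed

lemma norm_lat_le: "norm (lat p) \<le> 3 * real (lat_radius p) + 2"
proof -
  have "\<bar>fst p\<bar> \<le> int (lat_radius p)" "\<bar>snd p\<bar> \<le> int (lat_radius p)" unfolding lat_radius_def by auto
  then have m: "\<bar>real_of_int (fst p)\<bar> \<le> real (lat_radius p)" "\<bar>real_of_int (snd p)\<bar> \<le> real (lat_radius p)"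
    by (metis of_int_abs of_int_le_iff of_int_of_nat_eq)+
  have "sqrt 3 \<le> 2" by (simp add: real_le_lsqrt)
  then have "\<bar>real_of_int (snd p)\<bar> * sqrt 3 \<le> real (lat_radius p) * 2" using m(2) by (intro mult_mono) auto
  then have "\<bar>real_of_int (snd p) * sqrt 3 / 2\<bar> \<le> real (lat_radius p)" by (simp add: abs_mult)
  moreover have "0 \<le> sqrt 3" by simp
  ultimately have "\<bar>snd (lat p)\<bar> \<le> 1 + real (lat_radius p)" "\<bar>fst (lat p)\<bar> \<le> 1 + 2 * real (lat_radius p)"
    using m[unfolded abs_le_iff] \<open>sqrt 3 \<le> 2\<close> unfolding snd_lat fst_lat abs_le_iff by linarith+
  moreover have "norm (lat p) \<le> \<bar>fst (lat p)\<bar> + \<bar>snd (lat p)\<bar>"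
    using norm_Pair_le[of "fst (lat p)" "snd (lat p)"] by simp
  ultimately show ?thesis by linarith
qed

lemma harm_strict_mono:
  assumes "K < L" shows "harm K < (harm L :: real)"
proof -
  have "harm (Suc K) \<le> (harm L :: real)" using assms by (intro harm_mono) auto
  moreover have "harm (Suc K) = harm K + inverse (of_nat (Suc K) :: real)" by (rule harm_Suc)
  moreover have "inverse (of_nat (Suc K) :: real) > 0" by simp
  ultimately show ?thesis by linarith
qed

lemma harm_diff_eq_sum:
  assumes "a \<le> b" shows "harm b - harm a = (\<Sum>k\<in>{Suc a..b}. 1 / real k :: real)"
proof -
  have harm: "harm n = (\<Sum>k\<in>{1..<Suc n}. inverse (real k))" for n
    by (simp add: harm_def atLeastLessThanSuc_atLeastAtMost)
  have "harm b - harm a = (\<Sum>k\<in>{Suc a..<Suc b}. inverse (real k))"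
    unfolding harm using assms by (intro sum_diff_nat_ivl) auto
  then show ?thesis by (simp add: atLeastLessThanSuc_atLeastAtMost divide_inverse)
qed

lemma abs_harm_diff_le:
  assumes "k \<ge> 1" "j \<le> k + 1" "k \<le> j + 1"
  shows "\<bar>harm j - harm k\<bar> \<le> (1 / real k :: real)"
proof -
  consider "j = k + 1" | "j = k" | "k = j + 1" using assms by linarith
  then show ?thesis
  proof cases
    case 1
    then have "harm j - harm k = (inverse (real (Suc k)) :: real)" using harm_Suc[of k, where 'a=real] by simp
    moreover have "inverse (real (Suc k)) \<le> 1 / real k" using assms(1) by (simp add: field_simps)
    ultimately show ?thesis by simp
  next
    case 3
    then have "harm k - harm j = (inverse (real k) :: real)" using harm_Suc[of j, where 'a=real] by simp
    have "\<bar>harm j - harm k\<bar> = \<bar>harm k - harm j :: real\<bar>" by (rule abs_minus_commute)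
    also have "\<dots> = inverse (real k)" using \<open>harm k - harm j = inverse (real k)\<close> by simp
    finally show ?thesis by (simp add: divide_inverse)
  qed simp
qed

text \<open>The harmonic numbers stand in for the logarithm.\<close>
definition log_cutoff :: "nat \<Rightarrow> nat \<Rightarrow> nat \<Rightarrow> real" where
  "log_cutoff K L k = max 0 (min 1 ((harm L - harm k) / (harm L - harm K)))"

lemma log_cutoff_range: "0 \<le> log_cutoff K L k" "log_cutoff K L k \<le> 1"
  unfolding log_cutoff_def by auto

lemma log_cutoff_eq_1:
  assumes "K < L" "k \<le> K" shows "log_cutoff K L k = 1"
proof -
  have "(harm L - harm k) / (harm L - harm K) \<ge> (1::real)"
    using harm_strict_mono[OF assms(1)] harm_mono[OF assms(2)] by (simp add: field_simps)
  then show ?thesis unfolding log_cutoff_def by simp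
qed

lemma log_cutoff_eq_0:
  assumes "K < L" "L \<le> k" shows "log_cutoff K L k = 0"
proof -
  have "harm L - harm k \<le> (0::real)" "harm L - harm K > (0::real)"
    using harm_strict_mono[OF assms(1)] harm_mono[OF assms(2)] by simp_all
  then have "(harm L - harm k) / (harm L - harm K) \<le> (0::real)" by (rule divide_nonpos_pos)
  then show ?thesis unfolding log_cutoff_def by simp
qed

lemma log_cutoff_lipschitz:
  assumes "K < L"
  shows "\<bar>log_cutoff K L j - log_cutoff K L k\<bar> \<le> \<bar>harm j - harm k\<bar> / (harm L - harm K)"
proof -
  have "\<bar>max 0 (min 1 s) - max 0 (min 1 t)\<bar> \<le> \<bar>s - t\<bar>" for s t :: real
    by (simp add: max_def min_def)
  then have "\<bar>log_cutoff K L j - log_cutoff K L k\<bar>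
      \<le> \<bar>(harm L - harm j) / (harm L - harm K) - (harm L - harm k) / (harm L - harm K)\<bar>"
    unfolding log_cutoff_def .
  also have "\<dots> = \<bar>harm j - harm k\<bar> / (harm L - harm K)"
    using harm_strict_mono[OF assms] by (simp add: diff_divide_distrib[symmetric] abs_minus_commute)
  finally show ?thesis .
qed

definition log_cutoff_step_bound :: "nat \<Rightarrow> nat \<Rightarrow> nat \<Rightarrow> real" where
  "log_cutoff_step_bound K L k =
    (if K \<le> k \<and> k \<le> L + 1 then (1 / (real k * (harm L - harm K)))\<^sup>2 else 0)"

lemma log_cutoff_unit_step_sq_le:
  assumes "1 \<le> K" "K < L" "d \<in> unit_steps"
  shows "(log_cutoff K L (lat_radius (p + d)) - log_cutoff K L (lat_radius p))\<^sup>2 \<le> log_cutoff_step_bound K L (lat_radius p)"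
proof -
  define k where "k = lat_radius p"
  define j where "j = lat_radius (p + d)"
  have jk: "j \<le> k + 1" "k \<le> j + 1" using lat_radius_add_unit_step[OF assms(3), of p] unfolding j_def k_def by auto
  have H: "harm L - harm K > (0::real)" using harm_strict_mono[OF assms(2)] by simp
  consider "k < K" | "k > L + 1" | "K \<le> k \<and> k \<le> L + 1" by linarith
  then show ?thesis
  proof cases
    case 1
    then show ?thesis using jk assms log_cutoff_eq_1
      unfolding log_cutoff_step_bound_def j_def k_def by simp
  next
    case 2
    then show ?thesis using jk assms log_cutoff_eq_0
      unfolding log_cutoff_step_bound_def j_def k_def by simp
  next
    case 3
    have "\<bar>log_cutoff K L j - log_cutoff K L k\<bar> \<le> \<bar>harm j - harm k\<bar> / (harm L - harm K)"
      by (rule log_cutoff_lipschitz[OF assms(2)])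
    also have "\<dots> \<le> (1 / real k) / (harm L - harm K)"
      using abs_harm_diff_le[OF _ jk] 3 assms(1) H by (intro divide_right_mono) auto
    finally have "\<bar>log_cutoff K L j - log_cutoff K L k\<bar>\<^sup>2 \<le> (1 / (real k * (harm L - harm K)))\<^sup>2"
      by (intro power_mono) auto
    then show ?thesis using 3 unfolding log_cutoff_step_bound_def j_def k_def by simp
  qed
qed

lemma sum_log_cutoff_step_bound_le:
  assumes "1 \<le> K" "K < L" "finite P"
  shows "(\<Sum>p\<in>P. log_cutoff_step_bound K L (lat_radius p)) \<le> 12 * (harm L - harm K + 2) / (harm L - harm K)\<^sup>2"
proof -
  let ?H = "harm L - harm K :: real"
  have H: "?H > 0" using harm_strict_mono[OF assms(2)] by simp
  have "(\<Sum>p\<in>P. log_cutoff_step_bound K L (lat_radius p))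
      \<le> (\<Sum>k\<in>{K..L+1}. (8 * real k + 4) * log_cutoff_step_bound K L k)"
    using assms(3) by (intro sum_lat_radius_le_shells) (auto simp: log_cutoff_step_bound_def)
  also have "\<dots> \<le> (\<Sum>k\<in>{K..L+1}. 12 / ?H\<^sup>2 * (1 / real k))"
  proof (rule sum_mono)
    fix k assume "k \<in> {K..L+1}"
    then have k: "real k \<ge> 1" "K \<le> k \<and> k \<le> L + 1" using assms(1) by auto
    have "(8 * real k + 4) * log_cutoff_step_bound K L k = (8 * real k + 4) / (real k)\<^sup>2 / ?H\<^sup>2"
      using k unfolding log_cutoff_step_bound_def by (simp add: power2_eq_square field_simps)
    also have "(8 * real k + 4) / (real k)\<^sup>2 \<le> 12 / real k"
      using k by (simp add: power2_eq_square field_simps)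
    then have "(8 * real k + 4) / (real k)\<^sup>2 / ?H\<^sup>2 \<le> 12 / real k / ?H\<^sup>2"
      using H by (intro divide_right_mono) auto
    finally show "(8 * real k + 4) * log_cutoff_step_bound K L k \<le> 12 / ?H\<^sup>2 * (1 / real k)"
      by (simp add: mult.commute)
  qed
  also have "\<dots> = 12 / ?H\<^sup>2 * (\<Sum>k\<in>{K..L+1}. 1 / real k)"
    by (rule sum_distrib_left[symmetric])
  also have "(\<Sum>k\<in>{K..L+1}. 1 / real k) = harm (L + 1) - harm (K - 1)"
    using harm_diff_eq_sum[of "K - 1" "L + 1"] assms(1,2) by simp
  also have "12 / ?H\<^sup>2 * (harm (L + 1) - harm (K - 1)) \<le> 12 / ?H\<^sup>2 * (?H + 2)"
  proof -
    have "harm (L + 1) = harm L + inverse (real (Suc L) :: real)" "harm K = harm (K - 1) + inverse (real K :: real)"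
      using harm_Suc[of L] harm_Suc[of "K - 1"] assms(1) by simp_all
    moreover have "inverse (real (Suc L)) \<le> (1::real)" "inverse (real K) \<le> (1::real)"
      using assms(1) by (simp_all add: inverse_le_1_iff)
    ultimately show ?thesis using H by (intro mult_left_mono) auto
  qed
  finally show ?thesis by simp
qed

lemma sum_Bonds_le_lattice_sum:
  fixes g :: "pt \<times> pt \<Rightarrow> real" and f :: "int \<times> int \<Rightarrow> real"
  assumes "finite G" "G \<subseteq> Bonds"
    and g: "\<And>p d. d \<in> unit_steps \<Longrightarrow> g (lat p, lat (p + d)) \<le> f p" and f: "\<And>p. f p \<ge> 0"
  obtains P where "finite P" "(\<Sum>b\<in>G. g b) \<le> 6 * (\<Sum>p\<in>P. f p)"
proof -
  define bond where "bond x = (lat (fst x), lat (fst x + snd x))" for x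
  have "inj bond"
  proof (rule injI)
    fix x y assume "bond x = bond y"
    then have "lat (fst x) = lat (fst y)" "lat (fst x + snd x) = lat (fst y + snd y)"
      unfolding bond_def by auto
    then have "fst x = fst y" "fst x + snd x = fst y + snd y" using inj_lat by (auto dest: injD)
    then show "x = y" by (simp add: prod_eq_iff)
  qed
  define A where "A = bond -` G \<inter> (UNIV \<times> unit_steps)"
  have A: "finite A" unfolding A_def using finite_vimageI[OF assms(1) \<open>inj bond\<close>] by auto
  have "G = bond ` A"
  proof
    show "G \<subseteq> bond ` A"
    proof
      fix b assume "b \<in> G"
      then obtain p d where "d \<in> unit_steps" "b = (lat p, lat (p + d))"
        using assms(2) Bonds_lat_step by blast
      then show "b \<in> bond ` A" using \<open>b \<in> G\<close> unfolding A_def bond_def by (intro image_eqI[of _ _ "(p, d)"]) auto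
    qed
  qed (auto simp: A_def)
  then have "(\<Sum>b\<in>G. g b) = (\<Sum>x\<in>A. g (bond x))"
    using \<open>inj bond\<close> by (simp add: sum.reindex inj_on_subset[of bond UNIV])
  also have "\<dots> \<le> (\<Sum>x\<in>A. f (fst x))"
    using g unfolding A_def bond_def by (intro sum_mono) auto
  also have "\<dots> \<le> (\<Sum>x\<in>fst ` A \<times> unit_steps. f (fst x))"
  proof (rule sum_mono2)
    show "finite (fst ` A \<times> unit_steps)" using A by (simp add: unit_steps_def)
    show "A \<subseteq> fst ` A \<times> unit_steps" unfolding A_def by force
  qed (rule f)
  also have "\<dots> = (\<Sum>p\<in>fst ` A. \<Sum>d\<in>unit_steps. f p)"
    by (subst sum.cartesian_product) (simp add: case_prod_beta)
  also have "\<dots> = 6 * (\<Sum>p\<in>fst ` A. f p)"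
    by (simp add: unit_steps_def sum_distrib_left)
  finally show thesis using A by (intro that[of "fst ` A"]) auto
qed

text \<open>Only the values on \<open>Lam\<close> matter (elsewhere \<open>inv lat\<close> is arbitrary): the cutoff multiplies
  functions that vanish off \<open>Lam\<close>.\<close>
definition lattice_cutoff :: "nat \<Rightarrow> nat \<Rightarrow> pt \<Rightarrow> real" where
  "lattice_cutoff K L x = log_cutoff K L (lat_radius (inv lat x))"

lemma lattice_cutoff_lat [simp]: "lattice_cutoff K L (lat p) = log_cutoff K L (lat_radius p)"
  by (simp add: lattice_cutoff_def inv_f_f[OF inj_lat])

lemma sum_Dif_lattice_cutoff_sq_le:
  assumes "1 \<le> K" "K < L" "finite G" "G \<subseteq> Bonds"
  shows "(\<Sum>b\<in>G. (Dif (lattice_cutoff K L) b)\<^sup>2) \<le> 72 * (harm L - harm K + 2) / (harm L - harm K)\<^sup>2"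
proof -
  have "(Dif (lattice_cutoff K L) (lat p, lat (p + d)))\<^sup>2 \<le> log_cutoff_step_bound K L (lat_radius p)"
    if "d \<in> unit_steps" for p d
    using log_cutoff_unit_step_sq_le[OF assms(1,2) that] by (simp add: Dif_def)
  moreover have "log_cutoff_step_bound K L (lat_radius p) \<ge> 0" for p
    by (simp add: log_cutoff_step_bound_def)
  ultimately obtain P where P: "finite P"
    "(\<Sum>b\<in>G. (Dif (lattice_cutoff K L) b)\<^sup>2) \<le> 6 * (\<Sum>p\<in>P. log_cutoff_step_bound K L (lat_radius p))"
    using sum_Bonds_le_lattice_sum[OF assms(3,4)] by metis
  moreover have "(\<Sum>p\<in>P. log_cutoff_step_bound K L (lat_radius p)) \<le> 12 * (harm L - harm K + 2) / (harm L - harm K)\<^sup>2"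
    using assms(1,2) P(1) by (rule sum_log_cutoff_step_bound_le)
  ultimately show ?thesis by linarith
qed

lemma lattice_cutoff_mult_in_W0:
  assumes "K < L" "\<forall>x. x \<notin> Lam \<longrightarrow> v x = 0" "v xi0 = 0"
  shows "(\<lambda>x. lattice_cutoff K L x * v x) \<in> W0"
proof -
  define w where "w x = lattice_cutoff K L x * v x" for x
  have near: "norm x \<le> 3 * real L + 2" if "x \<in> Lam" "w x \<noteq> 0" for x
  proof -
    from that(1) obtain p where p: "x = lat p" unfolding Lam_eq_range_lat by blast
    then have "log_cutoff K L (lat_radius p) \<noteq> 0" using that(2) unfolding w_def by auto
    then have "lat_radius p \<le> L" using log_cutoff_eq_0[OF assms(1)] by (meson not_le less_imp_le)
    then show ?thesis using norm_lat_le[of p] p by simp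
  qed
  have "{b \<in> Bonds. Dif w b \<noteq> 0} \<subseteq> cball 0 (3 * real L + 3) \<times> cball 0 (3 * real L + 3)"
  proof
    fix b assume "b \<in> {b \<in> Bonds. Dif w b \<noteq> 0}"
    then obtain x y where b: "b = (x, y)" "x \<in> Lam" "y \<in> Lam" "dist x y = 1" "w x \<noteq> 0 \<or> w y \<noteq> 0"
      unfolding Bonds_def Dif_def by auto
    have "norm y \<le> norm x + 1" "norm x \<le> norm y + 1"
      using norm_triangle_ineq2[of x y] norm_triangle_ineq2[of y x] b(4)
      by (simp_all add: dist_norm norm_minus_commute)
    moreover have "norm x \<le> 3 * real L + 2 \<or> norm y \<le> 3 * real L + 2" using near b(2,3,5) by blast
    ultimately show "b \<in> cball 0 (3 * real L + 3) \<times> cball 0 (3 * real L + 3)"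
      using b(1) by auto
  qed
  then have "bounded {b \<in> Bonds. Dif w b \<noteq> 0}" by (rule bounded_subset[rotated]) (simp add: bounded_Times)
  then show ?thesis using assms(2,3) unfolding W0_def w_def by simp
qed

definition trunc :: "real \<Rightarrow> real \<Rightarrow> real" where
  "trunc M s = max (- M) (min M s)"

lemma abs_trunc_diff_le: "\<bar>trunc M s - trunc M t\<bar> \<le> \<bar>s - t\<bar>"
  and abs_trunc_remainder_diff_le: "\<bar>(trunc M s - s) - (trunc M t - t)\<bar> \<le> \<bar>s - t\<bar>"
  and trunc_eq_self: "\<bar>s\<bar> \<le> M \<Longrightarrow> trunc M s = s"
  and abs_trunc_le: "M \<ge> 0 \<Longrightarrow> \<bar>trunc M s\<bar> \<le> M"
  and trunc_zero: "M \<ge> 0 \<Longrightarrow> trunc M 0 = 0"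
  unfolding trunc_def by (auto simp: max_def min_def abs_if split: if_splits)

lemma Dif_cutoff_trunc_sq_le:
  fixes u \<eta> :: "pt \<Rightarrow> real"
  assumes M: "M \<ge> 0" and \<eta>: "\<And>x. 0 \<le> \<eta> x \<and> \<eta> x \<le> 1"
  shows "(Dif ((\<lambda>x. \<eta> x * trunc M (u x)) - u) b)\<^sup>2
    \<le> (if \<eta> (snd b) = 1 \<and> \<bar>u (fst b)\<bar> \<le> M \<and> \<bar>u (snd b)\<bar> \<le> M then 0 else 6 * (Dif u b)\<^sup>2)
      + 3 * M\<^sup>2 * (Dif \<eta> b)\<^sup>2"
proof -
  define p q where "p = fst b" and "q = snd b"
  define v where "v x = trunc M (u x)" for x
  define X Y Z where "X = (\<eta> q - 1) * (v q - v p)" and "Y = (\<eta> q - \<eta> p) * v p"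
    and "Z = (v q - u q) - (v p - u p)"
  have eq: "Dif ((\<lambda>x. \<eta> x * trunc M (u x)) - u) b = X + Y + Z"
    unfolding Dif_def X_def Y_def Z_def p_def q_def v_def by (simp add: algebra_simps)
  have Du: "Dif u b = u q - u p" and D\<eta>: "Dif \<eta> b = \<eta> q - \<eta> p" unfolding Dif_def p_def q_def by simp_all
  have "\<bar>X\<bar> \<le> 1 * \<bar>u q - u p\<bar>"
    unfolding X_def abs_mult v_def using \<eta>[of q] abs_trunc_diff_le by (intro mult_mono) auto
  then have X: "X\<^sup>2 \<le> (Dif u b)\<^sup>2" unfolding Du by (simp add: abs_le_square_iff)
  have "\<bar>Y\<bar> \<le> \<bar>\<eta> q - \<eta> p\<bar> * M" unfolding Y_def abs_mult v_def using abs_trunc_le[OF M] by (simp add: mult_left_mono)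
  then have Y: "Y\<^sup>2 \<le> M\<^sup>2 * (Dif \<eta> b)\<^sup>2" unfolding D\<eta> using M
    by (metis abs_ge_zero abs_le_square_iff abs_mult abs_of_nonneg mult.commute power_mult_distrib)
  have Z: "Z\<^sup>2 \<le> (Dif u b)\<^sup>2"
    unfolding Du Z_def v_def using abs_trunc_remainder_diff_le by (simp add: abs_le_square_iff)
  show ?thesis
  proof (cases "\<eta> (snd b) = 1 \<and> \<bar>u (fst b)\<bar> \<le> M \<and> \<bar>u (snd b)\<bar> \<le> M")
    case True
    then have "X = 0" "Z = 0" unfolding X_def Z_def v_def p_def q_def by (simp_all add: trunc_eq_self)
    then have "(X + Y + Z)\<^sup>2 = Y\<^sup>2" by simp
    moreover have "0 \<le> M\<^sup>2 * (Dif \<eta> b)\<^sup>2" by simp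
    ultimately have "(X + Y + Z)\<^sup>2 \<le> 3 * M\<^sup>2 * (Dif \<eta> b)\<^sup>2" using Y by linarith
    then show ?thesis using True unfolding eq by simp
  next
    case False
    have "(X + Y + Z)\<^sup>2 \<le> 3 * X\<^sup>2 + 3 * Y\<^sup>2 + 3 * Z\<^sup>2"
      using sum_squares_ge_zero[of "X - Y" "Y - Z"] zero_le_power2[of "X - Z"]
      by (simp add: power2_eq_square algebra_simps)
    then have "(X + Y + Z)\<^sup>2 \<le> 6 * (Dif u b)\<^sup>2 + 3 * M\<^sup>2 * (Dif \<eta> b)\<^sup>2" using X Y Z by linarith
    then show ?thesis using False unfolding eq by (simp only: if_False)
  qed
qed

lemma cutoff_trunc_approx:
  fixes u :: "pt \<Rightarrow> real" and F G :: "(pt \<times> pt) set"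
  assumes K: "1 \<le> K" "K < L" and M: "M \<ge> 0" and G: "finite G" "G \<subseteq> Bonds"
    and core: "\<And>b. b \<in> F \<Longrightarrow> lat_radius (inv lat (snd b)) \<le> K \<and> \<bar>u (fst b)\<bar> \<le> M \<and> \<bar>u (snd b)\<bar> \<le> M"
  shows "(\<Sum>b\<in>G. (Dif ((\<lambda>x. lattice_cutoff K L x * trunc M (u x)) - u) b)\<^sup>2)
    \<le> 6 * (\<Sum>b\<in>G - F. (Dif u b)\<^sup>2) + 3 * M\<^sup>2 * (72 * (harm L - harm K + 2) / (harm L - harm K)\<^sup>2)"
proof -
  let ?\<eta> = "lattice_cutoff K L"
  have range: "0 \<le> ?\<eta> x \<and> ?\<eta> x \<le> 1" for x
    unfolding lattice_cutoff_def using log_cutoff_range by auto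
  have "(\<Sum>b\<in>G. (Dif ((\<lambda>x. ?\<eta> x * trunc M (u x)) - u) b)\<^sup>2)
      \<le> (\<Sum>b\<in>G. (if b \<in> F then 0 else 6 * (Dif u b)\<^sup>2) + 3 * M\<^sup>2 * (Dif ?\<eta> b)\<^sup>2)"
  proof (rule sum_mono)
    fix b
    have "b \<in> F \<Longrightarrow> ?\<eta> (snd b) = 1 \<and> \<bar>u (fst b)\<bar> \<le> M \<and> \<bar>u (snd b)\<bar> \<le> M"
      using core log_cutoff_eq_1[OF K(2)] unfolding lattice_cutoff_def by blast
    then have "(if ?\<eta> (snd b) = 1 \<and> \<bar>u (fst b)\<bar> \<le> M \<and> \<bar>u (snd b)\<bar> \<le> M then 0 else 6 * (Dif u b)\<^sup>2)
        \<le> (if b \<in> F then 0 else 6 * (Dif u b)\<^sup>2)" by simp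
    then show "(Dif ((\<lambda>x. ?\<eta> x * trunc M (u x)) - u) b)\<^sup>2
        \<le> (if b \<in> F then 0 else 6 * (Dif u b)\<^sup>2) + 3 * M\<^sup>2 * (Dif ?\<eta> b)\<^sup>2"
      using Dif_cutoff_trunc_sq_le[where \<eta>="lattice_cutoff K L" and u=u and b=b, OF M range] by linarith
  qed
  also have "\<dots> = 6 * (\<Sum>b\<in>G - F. (Dif u b)\<^sup>2) + 3 * M\<^sup>2 * (\<Sum>b\<in>G. (Dif ?\<eta> b)\<^sup>2)"
    using G(1) by (simp add: sum.distrib sum_distrib_left sum.If_cases Diff_eq)
  also have "\<dots> \<le> 6 * (\<Sum>b\<in>G - F. (Dif u b)\<^sup>2) + 3 * M\<^sup>2 * (72 * (harm L - harm K + 2) / (harm L - harm K)\<^sup>2)"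
    using sum_Dif_lattice_cutoff_sq_le[OF K G] by (intro add_left_mono mult_left_mono) auto
  finally show ?thesis .
qed

lemma summable_on_small_tail:
  fixes f :: "'a \<Rightarrow> real"
  assumes "f summable_on A" "\<And>x. x \<in> A \<Longrightarrow> f x \<ge> 0" "\<tau> > 0"
  obtains F where "finite F" "F \<subseteq> A" "\<And>G. finite G \<Longrightarrow> G \<subseteq> A - F \<Longrightarrow> sum f G < \<tau>"
proof -
  obtain F where F: "finite F" "F \<subseteq> A" "dist (sum f F) (infsum f A) \<le> \<tau>/2"
    using infsum_finite_approximation[OF assms(1), of "\<tau>/2"] assms(3) by auto
  have tail: "sum f G < \<tau>" if G: "finite G" "G \<subseteq> A - F" for G
  proof -
    have "sum f F + sum f G = sum f (F \<union> G)" using F G by (intro sum.union_disjoint[symmetric]) auto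
    also have "\<dots> \<le> infsum f A" using F G assms by (intro finite_sum_le_infsum) auto
    finally show ?thesis using F(3) assms(3) unfolding dist_real_def by linarith
  qed
  show thesis by (rule that[OF F(1,2) tail])
qed

lemma normD_cutoff_trunc_diff_le:
  fixes u :: "pt \<Rightarrow> real" and F :: "(pt \<times> pt) set"
  assumes K: "1 \<le> K" "K < L" and M: "M \<ge> 0"
    and core: "\<And>b. b \<in> F \<Longrightarrow> lat_radius (inv lat (snd b)) \<le> K \<and> \<bar>u (fst b)\<bar> \<le> M \<and> \<bar>u (snd b)\<bar> \<le> M"
    and tail: "\<And>G. finite G \<Longrightarrow> G \<subseteq> Bonds - F \<Longrightarrow> (\<Sum>b\<in>G. (Dif u b)\<^sup>2) \<le> \<tau>"
  shows "normD ((\<lambda>x. lattice_cutoff K L x * trunc M (u x)) - u)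
    \<le> sqrt (6 * \<tau> + 3 * M\<^sup>2 * (72 * (harm L - harm K + 2) / (harm L - harm K)\<^sup>2))"
proof (rule normD_le_if_L2_set_le)
  fix G assume G: "finite G" "G \<subseteq> Bonds"
  have "(\<Sum>b\<in>G - F. (Dif u b)\<^sup>2) \<le> \<tau>" using tail G by auto
  then show "L2_set (Dif ((\<lambda>x. lattice_cutoff K L x * trunc M (u x)) - u)) G
      \<le> sqrt (6 * \<tau> + 3 * M\<^sup>2 * (72 * (harm L - harm K + 2) / (harm L - harm K)\<^sup>2))"
    using cutoff_trunc_approx[where F=F, OF K M G core] unfolding L2_set_def by (intro real_sqrt_le_mono) linarith
qed

lemma harm_unbounded: obtains L where "c \<le> (harm L :: real)"
  using harm_at_top[unfolded filterlim_at_top, rule_format, of c] by (auto simp: eventually_sequentially)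

text \<open>Functions in W12 need not be bounded, hence the truncation at a level \<open>M\<close>; it is chosen so
  that nothing changes on the finitely many bonds carrying most of the energy of \<open>u\<close>.\<close>
lemma W0_dense_in_W12:
  assumes u: "u \<in> W12" and e: "e > 0"
  shows "\<exists>w\<in>W0. normD (w - u) < e"
proof -
  define \<tau> where "\<tau> = e\<^sup>2 / 8"
  have \<tau>: "\<tau> > 0" using e by (simp add: \<tau>_def)
  have u_off: "\<forall>x. x \<notin> Lam \<longrightarrow> u x = 0" "u xi0 = 0"
    and u_sq: "(\<lambda>b. (Dif u b)\<^sup>2) summable_on Bonds" using u unfolding W12_def by auto
  obtain F0 where F0: "finite F0" "F0 \<subseteq> Bonds"
    and tail: "\<And>G. finite G \<Longrightarrow> G \<subseteq> Bonds - F0 \<Longrightarrow> (\<Sum>b\<in>G. (Dif u b)\<^sup>2) < \<tau>"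
    using summable_on_small_tail[OF u_sq _ \<tau>] by auto
  define M where "M = Max (insert 0 ((\<lambda>b. max \<bar>u (fst b)\<bar> \<bar>u (snd b)\<bar>) ` F0))"
  define K where "K = Max (insert 1 ((\<lambda>b. lat_radius (inv lat (snd b))) ` F0))"
  have M: "M \<ge> 0" and K: "1 \<le> K" using F0(1) unfolding M_def K_def by (auto intro: Max_ge)
  have F0_bound: "lat_radius (inv lat (snd b)) \<le> K \<and> \<bar>u (fst b)\<bar> \<le> M \<and> \<bar>u (snd b)\<bar> \<le> M" if "b \<in> F0" for b
  proof -
    have "max \<bar>u (fst b)\<bar> \<bar>u (snd b)\<bar> \<le> M" unfolding M_def using F0(1) that by (intro Max_ge) auto
    moreover have "lat_radius (inv lat (snd b)) \<le> K" unfolding K_def using F0(1) that by (intro Max_ge) auto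
    ultimately show ?thesis by simp
  qed
  obtain L where L: "harm K + 2 + 432 * M\<^sup>2 / \<tau> \<le> harm L" by (rule harm_unbounded)
  define H :: real where "H = harm L - harm K"
  have "0 \<le> 432 * M\<^sup>2 / \<tau>" using \<tau> by simp
  then have "H \<ge> 2" "432 * M\<^sup>2 / \<tau> \<le> H" using L unfolding H_def by linarith+
  then have H: "H \<ge> 2" "432 * M\<^sup>2 \<le> \<tau> * H" using \<tau> by (simp_all add: pos_divide_le_eq mult.commute)
  have "K < L"
    using H(1) harm_mono[of L K, where 'a=real] unfolding H_def by (cases "K < L") auto
  have cap: "3 * M\<^sup>2 * (72 * (H + 2) / H\<^sup>2) \<le> \<tau>"
  proof -
    have "72 * (H + 2) / H\<^sup>2 \<le> 144 * H / H\<^sup>2" using H by (intro divide_right_mono) auto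
    also have "\<dots> = 144 / H" using H by (simp add: power2_eq_square)
    finally have "3 * M\<^sup>2 * (72 * (H + 2) / H\<^sup>2) \<le> 3 * M\<^sup>2 * (144 / H)" by (intro mult_left_mono) auto
    also have "\<dots> \<le> \<tau>" using H by (simp add: divide_le_eq mult.commute)
    finally show ?thesis .
  qed
  define w where "w = (\<lambda>x. lattice_cutoff K L x * trunc M (u x))"
  have "w \<in> W0"
    using lattice_cutoff_mult_in_W0[OF \<open>K < L\<close>, of "\<lambda>x. trunc M (u x)"] u_off trunc_zero[OF M]
    unfolding w_def by simp
  have "normD (w - u) \<le> sqrt (6 * \<tau> + 3 * M\<^sup>2 * (72 * (H + 2) / H\<^sup>2))"
    unfolding w_def H_def using tail by (intro normD_cutoff_trunc_diff_le[OF K \<open>K < L\<close> M F0_bound]) force+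
  also have "\<dots> < sqrt (e\<^sup>2)"
  proof (rule real_sqrt_less_mono)
    have "e\<^sup>2 > 0" using e by simp
    then show "6 * \<tau> + 3 * M\<^sup>2 * (72 * (H + 2) / H\<^sup>2) < e\<^sup>2" using cap unfolding \<tau>_def by linarith
  qed
  finally show ?thesis using \<open>w \<in> W0\<close> e by auto
qed

section \<open>Extension from a dense subset\<close>

definition dcontinuous_on :: "('a \<Rightarrow> 'a \<Rightarrow> real) \<Rightarrow> 'a set \<Rightarrow> ('a \<Rightarrow> real) \<Rightarrow> bool" where
  "dcontinuous_on \<delta> S F \<longleftrightarrow> (\<forall>u\<in>S. \<forall>e>0. \<exists>d>0. \<forall>w\<in>S. \<delta> w u < d \<longrightarrow> \<bar>F w - F u\<bar> < e)"

lemma contD_on_eq_dcontinuous_on: "contD_on S F = dcontinuous_on (\<lambda>w u. normD (w - u)) S F"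
  unfolding contD_on_def dcontinuous_on_def ..

definition dlimit :: "('a \<Rightarrow> 'a \<Rightarrow> real) \<Rightarrow> 'a set \<Rightarrow> ('a \<Rightarrow> real) \<Rightarrow> 'a \<Rightarrow> real \<Rightarrow> bool" where
  "dlimit \<delta> S E u l \<longleftrightarrow> (\<forall>e>0. \<exists>d>0. \<forall>w\<in>S. \<delta> w u < d \<longrightarrow> \<bar>E w - l\<bar> < e)"

lemma dlimit_exists:
  fixes E :: "'a \<Rightarrow> real" and \<delta> :: "'a \<Rightarrow> 'a \<Rightarrow> real"
  assumes dense: "\<And>e. e > 0 \<Longrightarrow> \<exists>w\<in>S. \<delta> w u < e"
    and cauchy: "\<And>e. e > 0 \<Longrightarrow> \<exists>d>0. \<forall>w1\<in>S. \<forall>w2\<in>S. \<delta> w1 u < d \<longrightarrow> \<delta> w2 u < d \<longrightarrow> \<bar>E w1 - E w2\<bar> < e"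
  shows "\<exists>l. dlimit \<delta> S E u l"
proof -
  have "\<forall>n. \<exists>w. w \<in> S \<and> \<delta> w u < 1 / real (Suc n)"
    using dense[of "1 / real (Suc _)"] by (simp add: Bex_def)
  then obtain ws where ws: "\<And>n. ws n \<in> S" "\<And>n. \<delta> (ws n) u < 1 / real (Suc n)" by metis
  have close: "\<exists>N. \<forall>n\<ge>N. \<delta> (ws n) u < d" if "d > 0" for d
  proof -
    obtain N :: nat where N: "1 / d < N" using reals_Archimedean2 by blast
    have "1 / real (Suc n) < d" if "n \<ge> N" for n
    proof -
      have "1 / d < real (Suc n)" using N that by (smt (verit) of_nat_mono le_SucI)
      then show ?thesis using \<open>d > 0\<close> by (simp add: field_simps)
    qed
    then show ?thesis using ws(2) by (meson less_trans)
  qed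
  have "Cauchy (\<lambda>n. E (ws n))"
  proof (rule metric_CauchyI)
    fix e :: real assume "e > 0"
    then obtain d where "d > 0" and d: "\<forall>w1\<in>S. \<forall>w2\<in>S. \<delta> w1 u < d \<longrightarrow> \<delta> w2 u < d \<longrightarrow> \<bar>E w1 - E w2\<bar> < e"
      using cauchy by blast
    then obtain N where N: "\<forall>n\<ge>N. \<delta> (ws n) u < d" using close by blast
    have "dist (E (ws m)) (E (ws n)) < e" if "m \<ge> N" "n \<ge> N" for m n
      using d ws(1) N that unfolding dist_real_def by blast
    then show "\<exists>N. \<forall>m\<ge>N. \<forall>n\<ge>N. dist (E (ws m)) (E (ws n)) < e" by blast
  qed
  then obtain l where lim: "(\<lambda>n. E (ws n)) \<longlonglongrightarrow> l" using Cauchy_convergent_iff convergent_def by blast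
  have "\<exists>d>0. \<forall>w\<in>S. \<delta> w u < d \<longrightarrow> \<bar>E w - l\<bar> < e" if "e > 0" for e
  proof -
    obtain d where "d > 0" and d: "\<forall>w1\<in>S. \<forall>w2\<in>S. \<delta> w1 u < d \<longrightarrow> \<delta> w2 u < d \<longrightarrow> \<bar>E w1 - E w2\<bar> < e/2"
      using cauchy[of "e/2"] \<open>e > 0\<close> by auto
    obtain N1 where N1: "\<forall>n\<ge>N1. \<delta> (ws n) u < d" using close \<open>d > 0\<close> by blast
    obtain N2 where N2: "\<forall>n\<ge>N2. \<bar>E (ws n) - l\<bar> < e/2"
      using lim \<open>e > 0\<close> unfolding LIMSEQ_def dist_real_def by (meson half_gt_zero)
    define n where "n = max N1 N2"
    have "\<delta> (ws n) u < d" "\<bar>E (ws n) - l\<bar> < e/2" using N1 N2 unfolding n_def by auto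
    have "\<bar>E w - l\<bar> < e" if "w \<in> S" "\<delta> w u < d" for w
    proof -
      have "\<bar>E w - E (ws n)\<bar> < e/2" using d ws(1)[of n] that \<open>\<delta> (ws n) u < d\<close> by blast
      then show ?thesis using \<open>\<bar>E (ws n) - l\<bar> < e/2\<close> by linarith
    qed
    then show ?thesis using \<open>d > 0\<close> by blast
  qed
  then show ?thesis unfolding dlimit_def by blast
qed

lemma dlimit_unique:
  assumes dense: "\<And>e. e > 0 \<Longrightarrow> \<exists>w\<in>S. \<delta> w u < e"
    and l: "dlimit \<delta> S E u l" and l': "dlimit \<delta> S E u l'"
  shows "l = l'"
proof (rule ccontr)
  assume "l \<noteq> l'"
  then have pos: "\<bar>l - l'\<bar> / 2 > 0" by simp
  obtain d where "d > 0" and d: "\<forall>w\<in>S. \<delta> w u < d \<longrightarrow> \<bar>E w - l\<bar> < \<bar>l - l'\<bar> / 2"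
    using l[unfolded dlimit_def, THEN spec, THEN mp, OF pos] by blast
  obtain d' where "d' > 0" and d': "\<forall>w\<in>S. \<delta> w u < d' \<longrightarrow> \<bar>E w - l'\<bar> < \<bar>l - l'\<bar> / 2"
    using l'[unfolded dlimit_def, THEN spec, THEN mp, OF pos] by blast
  obtain w where "w \<in> S" "\<delta> w u < min d d'"
    using dense[of "min d d'"] \<open>d > 0\<close> \<open>d' > 0\<close> by auto
  then have "\<bar>E w - l\<bar> < \<bar>l - l'\<bar> / 2" "\<bar>E w - l'\<bar> < \<bar>l - l'\<bar> / 2" using d d' by auto
  then show False by (simp add: abs_less_iff abs_if split: if_splits)
qed

lemma dcontinuous_on_dlimit:
  assumes "S \<subseteq> T"
    and triangle: "\<And>x y z. x \<in> T \<Longrightarrow> y \<in> T \<Longrightarrow> z \<in> T \<Longrightarrow> \<delta> x z \<le> \<delta> x y + \<delta> y z"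
    and dense: "\<And>u e. u \<in> T \<Longrightarrow> e > 0 \<Longrightarrow> \<exists>w\<in>S. \<delta> w u < e"
    and lim: "\<And>u. u \<in> T \<Longrightarrow> dlimit \<delta> S E u (Ext u)"
  shows "dcontinuous_on \<delta> T Ext"
  unfolding dcontinuous_on_def
proof (intro ballI allI impI)
  fix u e assume u: "u \<in> T" and "(e::real) > 0"
  then obtain d1 where "d1 > 0" and d1: "\<forall>w\<in>S. \<delta> w u < d1 \<longrightarrow> \<bar>E w - Ext u\<bar> < e/2"
    using lim[OF u] unfolding dlimit_def by (meson half_gt_zero)
  have "\<bar>Ext v - Ext u\<bar> < e" if v: "v \<in> T" "\<delta> v u < d1/2" for v
  proof -
    obtain d2 where "d2 > 0" and d2: "\<forall>w\<in>S. \<delta> w v < d2 \<longrightarrow> \<bar>E w - Ext v\<bar> < e/2"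
      using lim[OF v(1)] \<open>e > 0\<close> unfolding dlimit_def by (meson half_gt_zero)
    obtain z where z: "z \<in> S" "\<delta> z v < min d2 (d1/2)"
      using dense[OF v(1)] \<open>d1 > 0\<close> \<open>d2 > 0\<close> by (metis half_gt_zero min_less_iff_conj)
    have "\<delta> z u < d1" using triangle[of z v u] z v u \<open>S \<subseteq> T\<close> by force
    then have "\<bar>E z - Ext u\<bar> < e/2" "\<bar>E z - Ext v\<bar> < e/2" using d1 d2 z by auto
    then show ?thesis by (simp add: abs_less_iff abs_if split: if_splits)
  qed
  then show "\<exists>d>0. \<forall>v\<in>T. \<delta> v u < d \<longrightarrow> \<bar>Ext v - Ext u\<bar> < e"
    using \<open>d1 > 0\<close> by (intro exI[of _ "d1/2"]) auto
qed

lemma extension_from_dense_subset: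
  fixes E :: "'a \<Rightarrow> real" and \<delta> :: "'a \<Rightarrow> 'a \<Rightarrow> real"
  assumes "S \<subseteq> T"
    and triangle: "\<And>x y z. x \<in> T \<Longrightarrow> y \<in> T \<Longrightarrow> z \<in> T \<Longrightarrow> \<delta> x z \<le> \<delta> x y + \<delta> y z"
    and refl: "\<And>x. x \<in> T \<Longrightarrow> \<delta> x x = 0"
    and dense: "\<And>u e. u \<in> T \<Longrightarrow> e > 0 \<Longrightarrow> \<exists>w\<in>S. \<delta> w u < e"
    and cauchy: "\<And>u e. u \<in> T \<Longrightarrow> e > 0 \<Longrightarrow>
      \<exists>d>0. \<forall>w1\<in>S. \<forall>w2\<in>S. \<delta> w1 u < d \<longrightarrow> \<delta> w2 u < d \<longrightarrow> \<bar>E w1 - E w2\<bar> < e"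
  shows "dcontinuous_on \<delta> S E \<and>
    (\<exists>Ext. (\<forall>u\<in>S. Ext u = E u) \<and> dcontinuous_on \<delta> T Ext \<and>
      (\<forall>F. (\<forall>u\<in>S. F u = E u) \<and> dcontinuous_on \<delta> T F \<longrightarrow> (\<forall>u\<in>T. F u = Ext u)))"
proof -
  define Ext where "Ext u = (SOME l. dlimit \<delta> S E u l)" for u
  have Ext: "dlimit \<delta> S E u (Ext u)" if "u \<in> T" for u
    unfolding Ext_def
    using dlimit_exists[where S=S and \<delta>=\<delta> and E=E and u=u, OF dense[OF that] cauchy[OF that]]
    by (rule someI_ex)
  have E: "dlimit \<delta> S E u (E u)" if "u \<in> S" for u
    unfolding dlimit_def using cauchy[of u] refl[of u] that \<open>S \<subseteq> T\<close> by fastforce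
  have "F u = Ext u" if F: "\<forall>u\<in>S. F u = E u" "dcontinuous_on \<delta> T F" and u: "u \<in> T" for F u
  proof -
    have "dlimit \<delta> S E u (F u)"
      using F \<open>S \<subseteq> T\<close> u unfolding dlimit_def dcontinuous_on_def by (metis subsetD)
    then show ?thesis using dlimit_unique[OF dense[OF u] _ Ext[OF u]] by blast
  qed
  moreover have "Ext u = E u" if "u \<in> S" for u
    using dlimit_unique[OF dense Ext E] that \<open>S \<subseteq> T\<close> by blast
  moreover have "dcontinuous_on \<delta> S E"
    using E unfolding dlimit_def dcontinuous_on_def by blast
  ultimately show ?thesis using dcontinuous_on_dlimit[OF \<open>S \<subseteq> T\<close> triangle dense Ext] by blast
qed

theorem lemma4p1:
  fixes \<psi> :: "real \<Rightarrow> real" and \<mu> \<epsilon> :: real and yhat :: "pt \<Rightarrow> real"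
  assumes psi_cont: "continuous_on UNIV \<psi>"
      and psi_C4: "C4_on (- half_ints) \<psi>"
      and psi1: "\<forall>x. \<psi> (x + 1) = \<psi> x"
      and psi2: "\<forall>x. \<psi> (- x) = \<psi> x" "\<forall>x. \<psi> (1/2 + (- x)) = \<psi> (1/2 + x)"
      and psi3: "\<forall>r. \<psi> r = 0 \<longleftrightarrow> r \<in> \<int>"
      and psi4: "(deriv ^^ 2) \<psi> 0 = \<mu>" "\<mu> > 0"
      and psi5: "\<forall>x\<in>{-1/2..1/2}. \<psi> x \<ge> 1/2 * \<mu> * x\<^sup>2"
      and eps: "\<epsilon> > 0" "\<forall>b\<in>Bonds. infdist (Dif yhat b) half_ints \<ge> \<epsilon>"
      and bdd: "\<exists>C. \<forall>v\<in>W0. dE0 \<psi> yhat v \<le> C * normD v"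
  shows "contD_on W0 (energy \<psi> yhat) \<and>
         (\<exists>Eb. (\<forall>u\<in>W0. Eb u = energy \<psi> yhat u) \<and> contD_on W12 Eb \<and>
              (\<forall>F. (\<forall>u\<in>W0. F u = energy \<psi> yhat u) \<and> contD_on W12 F \<longrightarrow>
                   (\<forall>u\<in>W12. F u = Eb u)))"
proof -
  obtain C where C: "\<forall>v\<in>W0. dE0 \<psi> yhat v \<le> C * normD v" using bdd by blast
  show ?thesis
    unfolding contD_on_eq_dcontinuous_on
  proof (rule extension_from_dense_subset[where \<delta>="\<lambda>w u. normD (w - u)", OF W0_subset_W12])
    show "\<exists>d>0. \<forall>w1\<in>W0. \<forall>w2\<in>W0. normD (w1 - u) < d \<longrightarrow> normD (w2 - u) < d \<longrightarrow>
        \<bar>energy \<psi> yhat w1 - energy \<psi> yhat w2\<bar> < e" if "u \<in> W12" "e > 0" for u e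
      using energy_locally_uniformly_continuous[OF psi_cont psi_C4 psi1 eps C that] .
  qed (auto intro: normD_diff_triangle W0_dense_in_W12)
qed

end
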